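(* Let $b^2>a^2>0$, $\theta\in[0,1]$, $s\ge0$, and let $u=(u^{(1)},u^{(2)},u^{(3)})^{\mathrm T}$ solve $$u_{tt}-a^2\Delta u-(b^2-a^2)\nabla\operatorname{div}u+(-\Delta)^{\theta}u_t=0\ \text{ on }(0,\infty)\times\mathbb{R}^3,\qquad (u,u_t)(0,\cdot)=(u_0,u_1),$$ with $(u_0^{(k)},u_1^{(k)})\in H^{s+1}(\mathbb{R}^3)\times H^s(\mathbb{R}^3)$ for $k=1,2,3$. Then for $k=1,2,3$ and $t\ge0$, $$\|u^{(k)}(t,\cdot)\|_{L^2}\lesssim(1+t)\sum_{j=1}^3\|(u_0^{(j)},u_1^{(j)})\|_{H^1\times L^2},$$ $$\||D|^{s+1}u^{(k)}(t,\cdot)\|_{L^2}+\||D|^su^{(k)}_t(t,\cdot)\|_{L^2}\lesssim(1+t)^{-\frac{s}{2\max\{1-\theta;\theta\}}}\sum_{j=1}^3\|(u_0^{(j)},u_1^{(j)})\|_{H^{s+1}\times H^s}.$$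
   Context: $(-\Delta)^\theta$ and $|D|^s$ are the Fourier multipliers with symbols $|\xi|^{2\theta}$ and $|\xi|^s$; $\|(f,g)\|_{H^{s+1}\times H^s}=\|f\|_{H^{s+1}}+\|g\|_{H^s}$. $\lesssim$ hides a constant independent of $t$ and data. *)

theory Defs
  imports "HOL-Analysis.Analysis"
begin

text \<open>Everything is stated on the Fourier side (Plancherel): a function
  on the physical space R^3 is represented by its Fourier transform, a function
  of the frequency variable xi :: real^3.  Normalisation constants of the
  Fourier transform are irrelevant because of the unspecified constant.\<close>

text \<open>Symbol |xi|^r of a homogeneous Fourier multiplier, with the convention
  |xi|^0 = 1 (identity operator), also at xi = 0.\<close>
definition sym_pow :: "real \<Rightarrow> real^3 \<Rightarrow> real" where
  "sym_pow r \<xi> = (if r = 0 then 1 else norm \<xi> powr r)"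

definition in_Hs :: "real \<Rightarrow> (real^3 \<Rightarrow> complex) \<Rightarrow> bool" where
  "in_Hs s fh \<longleftrightarrow> fh \<in> borel_measurable lborel \<and>
     integrable lborel (\<lambda>\<xi>. (1 + (norm \<xi>)\<^sup>2) powr s * (cmod (fh \<xi>))\<^sup>2)"

definition Hs_norm :: "real \<Rightarrow> (real^3 \<Rightarrow> complex) \<Rightarrow> real" where
  "Hs_norm s fh = sqrt (LINT \<xi>|lborel. (1 + (norm \<xi>)\<^sup>2) powr s * (cmod (fh \<xi>))\<^sup>2)"

definition in_dotHs :: "real \<Rightarrow> (real^3 \<Rightarrow> complex) \<Rightarrow> bool" where
  "in_dotHs s fh \<longleftrightarrow> fh \<in> borel_measurable lborel \<and>
     integrable lborel (\<lambda>\<xi>. (sym_pow s \<xi>)\<^sup>2 * (cmod (fh \<xi>))\<^sup>2)"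

definition D_norm :: "real \<Rightarrow> (real^3 \<Rightarrow> complex) \<Rightarrow> real" where
  "D_norm s fh = sqrt (LINT \<xi>|lborel. (sym_pow s \<xi>)\<^sup>2 * (cmod (fh \<xi>))\<^sup>2)"

text \<open>Fourier symbol of the operator
  w |-> -a^2 Laplace w - (b^2-a^2) grad div w + (-Laplace)^theta v
  applied at frequency xi to the pair (w, v):
  a^2 |xi|^2 w + (b^2-a^2) xi (xi . w) + |xi|^(2 theta) v.\<close>
definition elastic_symbol ::
  "real \<Rightarrow> real \<Rightarrow> real \<Rightarrow> real^3 \<Rightarrow> complex^3 \<Rightarrow> complex^3 \<Rightarrow> complex^3" where
  "elastic_symbol a b \<theta> \<xi> w v =
     (\<chi> i. of_real (a\<^sup>2 * (norm \<xi>)\<^sup>2) * w $ i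
          + of_real (b\<^sup>2 - a\<^sup>2) * of_real (\<xi> $ i) * (\<Sum>j\<in>UNIV. of_real (\<xi> $ j) * w $ j)
          + of_real (sym_pow (2 * \<theta>) \<xi>) * v $ i)"

text \<open>U t xi (with time derivative V t xi) is the Fourier transform in x of a
  solution u(t,x) of
  u_tt - a^2 Laplace u - (b^2-a^2) grad div u + (-Laplace)^theta u_t = 0,
  (u, u_t)(0) = (u0, u1), where U0, U1 are the Fourier transforms of u0, u1:
  for each frequency the ODE holds for all t \<ge> 0 (one-sided at t = 0).\<close>
definition is_solution ::
  "real \<Rightarrow> real \<Rightarrow> real \<Rightarrow> (real^3 \<Rightarrow> complex^3) \<Rightarrow> (real^3 \<Rightarrow> complex^3)
   \<Rightarrow> (real \<Rightarrow> real^3 \<Rightarrow> complex^3) \<Rightarrow> (real \<Rightarrow> real^3 \<Rightarrow> complex^3) \<Rightarrow> bool" where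
  "is_solution a b \<theta> U0 U1 U V \<longleftrightarrow>
     (\<forall>\<xi>. U 0 \<xi> = U0 \<xi> \<and> V 0 \<xi> = U1 \<xi> \<and>
        (\<forall>t\<ge>0. ((\<lambda>\<tau>. U \<tau> \<xi>) has_vector_derivative V t \<xi>) (at t within {0..}) \<and>
                ((\<lambda>\<tau>. V \<tau> \<xi>) has_vector_derivative
                    - elastic_symbol a b \<theta> \<xi> (U t \<xi>) (V t \<xi>)) (at t within {0..})))"

end

theory Submission
  imports Defs
begin

text \<open>On the Fourier side the system decouples, at every frequency \<open>\<xi> \<noteq> 0\<close>, into scalar damped
  oscillators \<open>y'' + |\<xi>|^(2 \<theta>) y' + \<kappa> y = 0\<close>: the longitudinal mode \<open>\<xi> \<cdot> U\<close> with stiffness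
  \<open>\<kappa> = b\<^sup>2 |\<xi>|\<^sup>2\<close> and the transversal modes \<open>|\<xi>|\<^sup>2 U\<^sub>k - \<xi>\<^sub>k (\<xi> \<cdot> U)\<close> with \<open>\<kappa> = a\<^sup>2 |\<xi>|\<^sup>2\<close>.
  For such an oscillator the energy perturbed by \<open>\<delta> Re (y conj y')\<close> decays like \<open>exp (- \<delta> t / 3)\<close>
  as long as \<open>\<delta>\<close> is small compared with damping and stiffness, which allows
  \<open>\<delta> \<sim> min (|\<xi>|^(2 m)) 1\<close> with \<open>m = max (1 - \<theta>) \<theta>\<close>. Against the weight \<open>|\<xi>|^(2 s)\<close> this
  exponential decay turns into the factor \<open>(1 + t)^(- s / m)\<close>, because \<open>y^p exp (- c y)\<close> is
  bounded; integrating in \<open>\<xi>\<close> gives the decay estimate. The \<open>L\<^sup>2\<close> estimate uses the same energy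
  bound with \<open>\<delta> = 0\<close>: the velocity stays bounded, so the displacement grows at most linearly.\<close>

section \<open>Damped oscillators\<close>

definition osc_cos :: "real \<Rightarrow> real \<Rightarrow> real" where
  "osc_cos D t = (if 0 < D then cosh (sqrt D * t) else if D = 0 then 1 else cos (sqrt (-D) * t))"

definition osc_sin :: "real \<Rightarrow> real \<Rightarrow> real" where
  "osc_sin D t =
     (if 0 < D then sinh (sqrt D * t) / sqrt D else if D = 0 then t else sin (sqrt (-D) * t) / sqrt (-D))"

lemma osc_cos_has_real_derivative: "(osc_cos D has_real_derivative D * osc_sin D t) (at t within S)"
proof -
  consider "0 < D" | "D = 0" | "D < 0" by linarith
  then show ?thesis
  proof cases
    case 1
    have "((\<lambda>t. cosh (sqrt D * t)) has_real_derivative sinh (sqrt D * t) * sqrt D) (at t within S)"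
      by (auto intro!: derivative_eq_intros)
    moreover have "D * (sinh (sqrt D * t) / sqrt D) = sinh (sqrt D * t) * sqrt D"
      using 1 by (simp add: field_simps)
    ultimately show ?thesis using 1 unfolding osc_cos_def osc_sin_def by simp
  next
    case 2
    then show ?thesis unfolding osc_cos_def osc_sin_def by (auto intro!: derivative_eq_intros)
  next
    case 3
    have "((\<lambda>t. cos (sqrt (-D) * t)) has_real_derivative - sin (sqrt (-D) * t) * sqrt (-D)) (at t within S)"
      by (auto intro!: derivative_eq_intros)
    moreover have neg_square: "D * (x / q) = - x * q" if "0 < q" "D = - (q * q)" for x q :: real
      using that by (simp add: field_simps)
    have "D * (sin (sqrt (-D) * t) / sqrt (-D)) = - sin (sqrt (-D) * t) * sqrt (-D)"
      by (rule neg_square) (use 3 in auto)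
    ultimately show ?thesis using 3 unfolding osc_cos_def osc_sin_def by simp
  qed
qed

lemma osc_sin_has_real_derivative: "(osc_sin D has_real_derivative osc_cos D t) (at t within S)"
proof -
  consider "0 < D" | "D = 0" | "D < 0" by linarith
  then show ?thesis
  proof cases
    case 1
    have "((\<lambda>t. sinh (sqrt D * t) / sqrt D) has_real_derivative cosh (sqrt D * t) * sqrt D / sqrt D)
        (at t within S)"
      by (auto intro!: derivative_eq_intros simp: mult.assoc)
    then show ?thesis using 1 unfolding osc_cos_def osc_sin_def by simp
  next
    case 2
    then show ?thesis unfolding osc_cos_def osc_sin_def by (auto intro!: derivative_eq_intros)
  next
    case 3
    have "((\<lambda>t. sin (sqrt (-D) * t) / sqrt (-D)) has_real_derivative
        cos (sqrt (-D) * t) * sqrt (-D) / sqrt (-D)) (at t within S)"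
      by (auto intro!: derivative_eq_intros simp: mult.assoc)
    then show ?thesis using 3 unfolding osc_cos_def osc_sin_def by simp
  qed
qed

text \<open>The fundamental solutions of \<open>y'' + d y' + \<kappa> y = 0\<close>, with \<open>(y, y') (0) = (1, 0)\<close> and
  \<open>(0, 1)\<close>; \<open>osc_cos\<close> and \<open>osc_sin\<close> are those of \<open>x'' = D x\<close> for the discriminant
  \<open>D = d\<^sup>2 / 4 - \<kappa>\<close>.\<close>
definition damped_cos :: "real \<Rightarrow> real \<Rightarrow> real \<Rightarrow> real" where
  "damped_cos d \<kappa> t =
     exp (- d * t / 2) * (osc_cos (d\<^sup>2/4 - \<kappa>) t + d/2 * osc_sin (d\<^sup>2/4 - \<kappa>) t)"

definition damped_sin :: "real \<Rightarrow> real \<Rightarrow> real \<Rightarrow> real" where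
  "damped_sin d \<kappa> t = exp (- d * t / 2) * osc_sin (d\<^sup>2/4 - \<kappa>) t"

lemma damped_cos_0 [simp]: "damped_cos d \<kappa> 0 = 1"
  and damped_sin_0 [simp]: "damped_sin d \<kappa> 0 = 0"
  by (simp_all add: damped_cos_def damped_sin_def osc_cos_def osc_sin_def)

lemma damped_cos_has_real_derivative:
  "(damped_cos d \<kappa> has_real_derivative - \<kappa> * damped_sin d \<kappa> t) (at t within S)"
proof -
  let ?D = "d\<^sup>2/4 - \<kappa>"
  have "(damped_cos d \<kappa> has_real_derivative
      exp (- d * t / 2) * (- d / 2) * (osc_cos ?D t + d/2 * osc_sin ?D t)
      + exp (- d * t / 2) * (?D * osc_sin ?D t + d/2 * osc_cos ?D t)) (at t within S)"
    unfolding damped_cos_def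
    by (auto intro!: derivative_eq_intros osc_cos_has_real_derivative osc_sin_has_real_derivative)
  then show ?thesis
    by (rule DERIV_cong) (simp add: damped_sin_def power2_eq_square algebra_simps)
qed

lemma damped_sin_has_real_derivative:
  "(damped_sin d \<kappa> has_real_derivative damped_cos d \<kappa> t - d * damped_sin d \<kappa> t) (at t within S)"
proof -
  let ?D = "d\<^sup>2/4 - \<kappa>"
  have "(damped_sin d \<kappa> has_real_derivative
      exp (- d * t / 2) * (- d / 2) * osc_sin ?D t + exp (- d * t / 2) * osc_cos ?D t) (at t within S)"
    unfolding damped_sin_def
    by (auto intro!: derivative_eq_intros osc_sin_has_real_derivative)
  then show ?thesis
    by (rule DERIV_cong) (simp add: damped_cos_def damped_sin_def algebra_simps)
qed

definition solves_damped_osc ::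
  "real \<Rightarrow> real \<Rightarrow> (real \<Rightarrow> complex) \<Rightarrow> (real \<Rightarrow> complex) \<Rightarrow> bool" where
  "solves_damped_osc d \<kappa> y y' \<longleftrightarrow>
     (\<forall>t\<ge>0. (y has_vector_derivative y' t) (at t within {0..}) \<and>
             (y' has_vector_derivative - (of_real \<kappa> * y t + of_real d * y' t)) (at t within {0..}))"

definition damped_osc_sol :: "real \<Rightarrow> real \<Rightarrow> complex \<Rightarrow> complex \<Rightarrow> real \<Rightarrow> complex" where
  "damped_osc_sol d \<kappa> y0 y1 t = damped_cos d \<kappa> t *\<^sub>R y0 + damped_sin d \<kappa> t *\<^sub>R y1"

lemma damped_osc_sol_0 [simp]: "damped_osc_sol d \<kappa> y0 y1 0 = y0"
  by (simp add: damped_osc_sol_def)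

definition damped_osc_vel :: "real \<Rightarrow> real \<Rightarrow> complex \<Rightarrow> complex \<Rightarrow> real \<Rightarrow> complex" where
  "damped_osc_vel d \<kappa> y0 y1 = damped_osc_sol d \<kappa> y1 (- (of_real \<kappa> * y0 + of_real d * y1))"

lemma damped_osc_vel_0 [simp]: "damped_osc_vel d \<kappa> y0 y1 0 = y1"
  by (simp add: damped_osc_vel_def)

lemma damped_osc_sol_has_vector_derivative:
  "(damped_osc_sol d \<kappa> y0 y1 has_vector_derivative damped_osc_vel d \<kappa> y0 y1 t) (at t within S)"
proof -
  have "(damped_osc_sol d \<kappa> y0 y1 has_vector_derivative
      (damped_cos d \<kappa> t *\<^sub>R 0 + (- \<kappa> * damped_sin d \<kappa> t) *\<^sub>R y0)
      + (damped_sin d \<kappa> t *\<^sub>R 0 + (damped_cos d \<kappa> t - d * damped_sin d \<kappa> t) *\<^sub>R y1)) (at t within S)"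
    unfolding damped_osc_sol_def
    by (intro has_vector_derivative_add has_vector_derivative_scaleR has_vector_derivative_const
        damped_cos_has_real_derivative damped_sin_has_real_derivative)
  then show ?thesis
    by (rule has_vector_derivative_eq_rhs)
      (simp add: damped_osc_vel_def damped_osc_sol_def scaleR_conv_of_real algebra_simps)
qed

lemma solves_damped_osc_sol: "solves_damped_osc d \<kappa> (damped_osc_sol d \<kappa> y0 y1) (damped_osc_vel d \<kappa> y0 y1)"
  unfolding solves_damped_osc_def
proof (intro allI impI conjI damped_osc_sol_has_vector_derivative)
  fix t :: real
  show "(damped_osc_vel d \<kappa> y0 y1 has_vector_derivative
      - (of_real \<kappa> * damped_osc_sol d \<kappa> y0 y1 t + of_real d * damped_osc_vel d \<kappa> y0 y1 t))
      (at t within {0..})"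
    unfolding damped_osc_vel_def[of d \<kappa> y0 y1]
    by (rule has_vector_derivative_eq_rhs[OF damped_osc_sol_has_vector_derivative])
      (simp add: damped_osc_vel_def damped_osc_sol_def scaleR_conv_of_real algebra_simps)
qed

lemma DERIV_nonpos_imp_le_initial:
  fixes g g' :: "real \<Rightarrow> real"
  assumes "\<And>t. 0 \<le> t \<Longrightarrow> (g has_real_derivative g' t) (at t within {0..})"
    and "\<And>t. 0 \<le> t \<Longrightarrow> g' t \<le> 0" and "0 \<le> t"
  shows "g t \<le> g 0"
proof -
  have "\<exists>x\<in>{0..t}. g t - g 0 = (\<lambda>h. g' x * h) (t - 0)"
  proof (rule mvt_very_simple[OF \<open>0 \<le> t\<close>])
    fix x assume "0 \<le> x" "x \<le> t"
    then have "(g has_real_derivative g' x) (at x within {0..t})"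
      by (intro DERIV_subset[OF assms(1)]) auto
    then show "(g has_derivative (\<lambda>h. g' x * h)) (at x within {0..t})"
      by (simp add: has_field_derivative_def)
  qed
  then obtain x where "x \<in> {0..t}" "g t - g 0 = g' x * t" by auto
  moreover have "g' x * t \<le> 0"
    using assms(2,3) \<open>x \<in> {0..t}\<close> by (simp add: mult_nonpos_nonneg)
  ultimately show ?thesis by simp
qed

lemma has_real_derivative_inner:
  assumes "(y has_vector_derivative Y) (at t within S)" "(z has_vector_derivative Z) (at t within S)"
  shows "((\<lambda>t. y t \<bullet> z t) has_real_derivative (Y \<bullet> z t + y t \<bullet> Z)) (at t within S)"
proof -
  have "((\<lambda>t. y t \<bullet> z t) has_derivative (\<lambda>h. y t \<bullet> (h *\<^sub>R Z) + (h *\<^sub>R Y) \<bullet> z t)) (at t within S)"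
    using assms unfolding has_vector_derivative_def by (intro has_derivative_inner)
  then show ?thesis unfolding has_field_derivative_def
    by (rule has_derivative_eq_rhs) (auto simp: fun_eq_iff algebra_simps)
qed

text \<open>The rate \<open>\<delta>\<close> is admissible for \<open>y'' + d y' + \<kappa> y = 0\<close> when the Lyapunov functional
  \<open>|y'|\<^sup>2 + \<kappa> |y|\<^sup>2 + \<delta> Re (y conj y')\<close> decays at least like \<open>exp (- \<delta> t / 3)\<close>; the four
  conditions are exactly what the estimate of its derivative uses.\<close>
definition admissible_rate :: "real \<Rightarrow> real \<Rightarrow> real \<Rightarrow> bool" where
  "admissible_rate \<delta> \<kappa> d \<longleftrightarrow> 0 \<le> \<delta> \<and> \<delta>\<^sup>2 \<le> \<kappa> \<and> 2 * \<delta> \<le> d \<and> \<delta> * d \<le> \<kappa>"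

lemma admissible_rate_zero: "0 \<le> \<kappa> \<Longrightarrow> 0 \<le> d \<Longrightarrow> admissible_rate 0 \<kappa> d"
  by (simp add: admissible_rate_def)

lemma admissible_rate_mono: "admissible_rate \<delta> \<kappa> d \<Longrightarrow> \<kappa> \<le> \<kappa>' \<Longrightarrow> admissible_rate \<delta> \<kappa>' d"
  by (auto simp: admissible_rate_def)

lemma cross_term_le:
  fixes nf ny x \<kappa> \<delta> :: real
  assumes "\<bar>x\<bar> \<le> ny * nf" "0 \<le> \<delta>" "\<delta>\<^sup>2 \<le> \<kappa>"
  shows "\<delta> * \<bar>x\<bar> \<le> (nf\<^sup>2 + \<kappa> * ny\<^sup>2) / 2"
proof -
  have "\<delta> * \<bar>x\<bar> \<le> nf * (\<delta> * ny)"
    using assms by (metis mult.commute mult.left_commute mult_left_mono)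
  also have "\<dots> \<le> (nf\<^sup>2 + (\<delta> * ny)\<^sup>2) / 2"
    using sum_squares_bound[of nf "\<delta> * ny"] by (simp add: power2_eq_square)
  also have "(\<delta> * ny)\<^sup>2 \<le> \<kappa> * ny\<^sup>2"
    using assms by (simp add: power_mult_distrib mult_right_mono)
  finally show ?thesis by simp
qed

lemma lyapunov_derivative_le:
  fixes nf ny x :: real
  assumes "admissible_rate \<delta> \<kappa> d" "\<bar>x\<bar> \<le> ny * nf"
  shows "\<delta> * nf\<^sup>2 - 2 * d * nf\<^sup>2 - \<delta> * \<kappa> * ny\<^sup>2 - \<delta> * d * x + \<delta> / 3 * (nf\<^sup>2 + \<kappa> * ny\<^sup>2 + \<delta> * x)
    \<le> 0"
proof -
  have \<delta>: "0 \<le> \<delta>" "\<delta>\<^sup>2 \<le> \<kappa>" "2 * \<delta> \<le> d" "\<delta> * d \<le> \<kappa>"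
    using assms(1) by (auto simp: admissible_rate_def)
  have "d * (\<delta> * \<bar>x\<bar>) \<le> d * ((nf\<^sup>2 + \<delta>\<^sup>2 * ny\<^sup>2) / 2)"
    using cross_term_le[OF assms(2) \<delta>(1) order_refl] \<delta> by (intro mult_left_mono) auto
  also have "\<dots> \<le> d / 2 * nf\<^sup>2 + \<delta> * \<kappa> / 2 * ny\<^sup>2"
  proof -
    have "\<delta> * (\<delta> * d) \<le> \<delta> * \<kappa>"
      using \<delta> by (intro mult_left_mono) auto
    then have "(d * \<delta>\<^sup>2) * ny\<^sup>2 \<le> (\<delta> * \<kappa>) * ny\<^sup>2"
      by (intro mult_right_mono) (simp_all add: power2_eq_square mult_ac)
    then show ?thesis
      by (simp add: algebra_simps)
  qed
  finally have "\<delta> * d * \<bar>x\<bar> \<le> d / 2 * nf\<^sup>2 + \<delta> * \<kappa> / 2 * ny\<^sup>2"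
    by (simp add: mult_ac)
  moreover have "(\<delta> * d) * (- x) \<le> (\<delta> * d) * \<bar>x\<bar>"
    using \<delta> by (intro mult_left_mono) auto
  ultimately have B1: "- (\<delta> * d * x) \<le> d / 2 * nf\<^sup>2 + \<delta> * \<kappa> / 2 * ny\<^sup>2"
    by linarith
  have "\<delta> * x \<le> \<delta> * \<bar>x\<bar>"
    using \<delta>(1) by (intro mult_left_mono) auto
  then have "\<delta> * x \<le> (nf\<^sup>2 + \<kappa> * ny\<^sup>2) / 2"
    using cross_term_le[OF assms(2) \<delta>(1,2)] by linarith
  then have B2: "\<delta> / 3 * (\<delta> * x) \<le> \<delta> / 6 * nf\<^sup>2 + \<delta> * \<kappa> / 6 * ny\<^sup>2"
    using \<delta>(1) by (auto dest: mult_left_mono[where c = "\<delta> / 3"] simp: algebra_simps)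
  have "\<delta> * nf\<^sup>2 \<le> d * nf\<^sup>2"
    using \<delta> by (auto intro: mult_right_mono)
  with B1 B2 show ?thesis
    by (simp add: algebra_simps)
qed

lemma damped_osc_lyapunov_has_derivative:
  assumes "solves_damped_osc d \<kappa> y y'" "0 \<le> t"
  shows "((\<lambda>t. y' t \<bullet> y' t + \<kappa> * (y t \<bullet> y t) + \<delta> * (y t \<bullet> y' t)) has_real_derivative
      \<delta> * (y' t \<bullet> y' t) - 2 * d * (y' t \<bullet> y' t) - \<delta> * \<kappa> * (y t \<bullet> y t) - \<delta> * d * (y t \<bullet> y' t))
      (at t within {0..})"
proof -
  have "- (of_real \<kappa> * y t + of_real d * y' t) = - (\<kappa> *\<^sub>R y t + d *\<^sub>R y' t)"
    by (simp add: scaleR_conv_of_real)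
  then have dy: "(y has_vector_derivative y' t) (at t within {0..})"
    and dy': "(y' has_vector_derivative - (\<kappa> *\<^sub>R y t + d *\<^sub>R y' t)) (at t within {0..})"
    using assms unfolding solves_damped_osc_def by auto
  have "((\<lambda>t. y' t \<bullet> y' t + \<kappa> * (y t \<bullet> y t) + \<delta> * (y t \<bullet> y' t)) has_real_derivative
      (- (\<kappa> *\<^sub>R y t + d *\<^sub>R y' t) \<bullet> y' t + y' t \<bullet> - (\<kappa> *\<^sub>R y t + d *\<^sub>R y' t))
      + \<kappa> * (y' t \<bullet> y t + y t \<bullet> y' t) + \<delta> * (y' t \<bullet> y' t + y t \<bullet> - (\<kappa> *\<^sub>R y t + d *\<^sub>R y' t)))
      (at t within {0..})"
    by (intro DERIV_add DERIV_cmult has_real_derivative_inner dy dy')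
  then show ?thesis
    by (rule DERIV_cong) (simp add: inner_add_left inner_add_right inner_commute algebra_simps)
qed

lemma damped_osc_energy_decay:
  assumes sol: "solves_damped_osc d \<kappa> y y'" and \<delta>: "admissible_rate \<delta> \<kappa> d" and "0 \<le> t"
  shows "(cmod (y' t))\<^sup>2 + \<kappa> * (cmod (y t))\<^sup>2
    \<le> 3 * exp (- \<delta> * t / 3) * ((cmod (y' 0))\<^sup>2 + \<kappa> * (cmod (y 0))\<^sup>2)"
proof -
  define E where "E t = (cmod (y' t))\<^sup>2 + \<kappa> * (cmod (y t))\<^sup>2" for t
  define F where "F t = y' t \<bullet> y' t + \<kappa> * (y t \<bullet> y t) + \<delta> * (y t \<bullet> y' t)" for t
  have cs: "\<bar>y s \<bullet> y' s\<bar> \<le> cmod (y s) * cmod (y' s)" for s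
    by (rule Cauchy_Schwarz_ineq2)
  have F_eq: "F s = E s + \<delta> * (y s \<bullet> y' s)" for s
    by (simp add: E_def F_def power2_norm_eq_inner)
  have cross: "\<bar>\<delta> * (y s \<bullet> y' s)\<bar> \<le> E s / 2" for s
    using cross_term_le[OF cs] \<delta> by (simp add: E_def admissible_rate_def abs_mult)
  have E_le_F: "E s \<le> 2 * F s" and F_le_E: "F s \<le> 3/2 * E s" for s
    using cross[of s] unfolding F_eq abs_le_iff by auto
  have "exp (\<delta> * t / 3) * F t \<le> exp (\<delta> * 0 / 3) * F 0"
  proof (rule DERIV_nonpos_imp_le_initial[where g = "\<lambda>t. exp (\<delta> * t / 3) * F t"])
    fix s :: real assume "0 \<le> s"
    show "((\<lambda>t. exp (\<delta> * t / 3) * F t) has_real_derivative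
        exp (\<delta> * s / 3) * (\<delta> / 3 * F s + (\<delta> * (y' s \<bullet> y' s) - 2 * d * (y' s \<bullet> y' s)
          - \<delta> * \<kappa> * (y s \<bullet> y s) - \<delta> * d * (y s \<bullet> y' s)))) (at s within {0..})"
    proof (rule DERIV_cong[OF DERIV_mult])
      show "((\<lambda>t. exp (\<delta> * t / 3)) has_real_derivative exp (\<delta> * s / 3) * (\<delta> / 3)) (at s within {0..})"
        by (auto intro!: derivative_eq_intros)
    qed (use damped_osc_lyapunov_has_derivative[OF sol \<open>0 \<le> s\<close>] in \<open>auto simp: F_def algebra_simps\<close>)
    show "exp (\<delta> * s / 3) * (\<delta> / 3 * F s + (\<delta> * (y' s \<bullet> y' s) - 2 * d * (y' s \<bullet> y' s)
          - \<delta> * \<kappa> * (y s \<bullet> y s) - \<delta> * d * (y s \<bullet> y' s))) \<le> 0"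
      using lyapunov_derivative_le[OF \<delta> cs[of s]]
      by (intro mult_nonneg_nonpos) (simp_all add: F_def power2_norm_eq_inner algebra_simps)
  qed fact
  then have "F t \<le> exp (- \<delta> * t / 3) * F 0"
    by (simp add: exp_minus field_simps)
  also have "\<dots> \<le> exp (- \<delta> * t / 3) * (3/2 * E 0)"
    using F_le_E by (intro mult_left_mono) auto
  also have "\<dots> = 3/2 * exp (- \<delta> * t / 3) * E 0"
    by simp
  finally show ?thesis
    using E_le_F[of t] unfolding E_def by linarith
qed

lemma solves_damped_osc_diff:
  assumes "solves_damped_osc d \<kappa> y y'" "solves_damped_osc d \<kappa> z z'"
  shows "solves_damped_osc d \<kappa> (\<lambda>t. y t - z t) (\<lambda>t. y' t - z' t)"
  unfolding solves_damped_osc_def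
proof (intro allI impI conjI)
  fix t :: real assume "0 \<le> t"
  with assms show "((\<lambda>t. y t - z t) has_vector_derivative y' t - z' t) (at t within {0..})"
    unfolding solves_damped_osc_def by (blast intro: has_vector_derivative_diff)
  from \<open>0 \<le> t\<close> assms
  have "((\<lambda>t. y' t - z' t) has_vector_derivative
      - (of_real \<kappa> * y t + of_real d * y' t) - - (of_real \<kappa> * z t + of_real d * z' t)) (at t within {0..})"
    unfolding solves_damped_osc_def by (blast intro: has_vector_derivative_diff)
  then show "((\<lambda>t. y' t - z' t) has_vector_derivative
      - (of_real \<kappa> * (y t - z t) + of_real d * (y' t - z' t))) (at t within {0..})"
    by (rule has_vector_derivative_eq_rhs) (simp add: algebra_simps)
qed

lemma solves_damped_osc_unique:
  assumes sol: "solves_damped_osc d \<kappa> y y'" and "0 < \<kappa>" "0 \<le> d" "0 \<le> t"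
  shows "y t = damped_osc_sol d \<kappa> (y 0) (y' 0) t"
    and "y' t = damped_osc_vel d \<kappa> (y 0) (y' 0) t"
proof -
  let ?z = "damped_osc_sol d \<kappa> (y 0) (y' 0)"
  let ?z' = "damped_osc_vel d \<kappa> (y 0) (y' 0)"
  have z: "solves_damped_osc d \<kappa> ?z ?z'"
    by (rule solves_damped_osc_sol)
  have adm: "admissible_rate 0 \<kappa> d"
    using assms by (simp add: admissible_rate_zero)
  have "(cmod (y' t - ?z' t))\<^sup>2 + \<kappa> * (cmod (y t - ?z t))\<^sup>2
      \<le> 3 * exp (- 0 * t / 3) * ((cmod (y' 0 - ?z' 0))\<^sup>2 + \<kappa> * (cmod (y 0 - ?z 0))\<^sup>2)"
    by (rule damped_osc_energy_decay[OF solves_damped_osc_diff[OF sol z] adm \<open>0 \<le> t\<close>])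
  then have "(cmod (y' t - ?z' t))\<^sup>2 + \<kappa> * (cmod (y t - ?z t))\<^sup>2 \<le> 0"
    by simp
  moreover have "0 \<le> \<kappa> * (cmod (y t - ?z t))\<^sup>2"
    using \<open>0 < \<kappa>\<close> by simp
  ultimately have "(cmod (y' t - ?z' t))\<^sup>2 = 0" "\<kappa> * (cmod (y t - ?z t))\<^sup>2 = 0"
    using zero_le_power2[of "cmod (y' t - ?z' t)"] by linarith+
  with \<open>0 < \<kappa>\<close> show "y t = ?z t" "y' t = ?z' t"
    by simp_all
qed

section \<open>Longitudinal and transversal modes\<close>

text \<open>\<open>\<xi> \<cdot> w\<close> and \<open>|\<xi>|\<^sup>2 w\<^sub>k - \<xi>\<^sub>k (\<xi> \<cdot> w)\<close> are the Fourier transforms of \<open>div\<close> (up to a factor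
  \<open>i\<close>) and of the \<open>k\<close>-th component of \<open>curl curl\<close>; the elastic symbol multiplies them by
  \<open>b\<^sup>2 |\<xi>|\<^sup>2\<close> and \<open>a\<^sup>2 |\<xi>|\<^sup>2\<close> respectively.\<close>
definition long_mode :: "real^3 \<Rightarrow> complex^3 \<Rightarrow> complex" where
  "long_mode \<xi> w = (\<Sum>j\<in>UNIV. of_real (\<xi> $ j) * w $ j)"

definition trans_mode :: "real^3 \<Rightarrow> 3 \<Rightarrow> complex^3 \<Rightarrow> complex" where
  "trans_mode \<xi> k w = of_real ((norm \<xi>)\<^sup>2) * w $ k - of_real (\<xi> $ k) * long_mode \<xi> w"

lemma bounded_linear_long_mode: "bounded_linear (long_mode \<xi>)"
  unfolding long_mode_def
  by (intro bounded_linear_sum bounded_linear_compose[OF bounded_linear_mult_right] bounded_linear_vec_nth)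

lemma bounded_linear_trans_mode: "bounded_linear (trans_mode \<xi> k)"
  unfolding trans_mode_def
  by (intro bounded_linear_sub bounded_linear_compose[OF bounded_linear_mult_right]
      bounded_linear_vec_nth bounded_linear_long_mode)

lemma trans_mode_recombine:
  "of_real ((norm \<xi>)\<^sup>2) * w $ k = trans_mode \<xi> k w + of_real (\<xi> $ k) * long_mode \<xi> w"
  by (simp add: trans_mode_def)

lemma sum_of_real_square_eq_norm_power2: "(\<Sum>j\<in>UNIV. of_real (\<xi> $ j) * of_real (\<xi> $ j)) = (of_real ((norm \<xi>)\<^sup>2) :: complex)"
  by (simp add: power2_norm_eq_inner inner_vec_def flip: of_real_mult)

lemma elastic_symbol_nth:
  "elastic_symbol a b \<theta> \<xi> w v $ i = of_real (a\<^sup>2 * (norm \<xi>)\<^sup>2) * w $ i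
     + of_real (b\<^sup>2 - a\<^sup>2) * of_real (\<xi> $ i) * long_mode \<xi> w + of_real (sym_pow (2 * \<theta>) \<xi>) * v $ i"
  by (simp add: elastic_symbol_def long_mode_def)

lemma long_mode_elastic_symbol:
  "long_mode \<xi> (elastic_symbol a b \<theta> \<xi> w v)
     = of_real (b\<^sup>2 * (norm \<xi>)\<^sup>2) * long_mode \<xi> w + of_real (sym_pow (2 * \<theta>) \<xi>) * long_mode \<xi> v"
proof -
  have "long_mode \<xi> (elastic_symbol a b \<theta> \<xi> w v)
      = (\<Sum>i\<in>UNIV. of_real (a\<^sup>2 * (norm \<xi>)\<^sup>2) * (of_real (\<xi> $ i) * w $ i)
          + (of_real (b\<^sup>2 - a\<^sup>2) * long_mode \<xi> w) * (of_real (\<xi> $ i) * of_real (\<xi> $ i))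
          + of_real (sym_pow (2 * \<theta>) \<xi>) * (of_real (\<xi> $ i) * v $ i))"
    unfolding long_mode_def[of \<xi> "elastic_symbol a b \<theta> \<xi> w v"] elastic_symbol_nth
    by (rule sum.cong) (simp_all add: algebra_simps)
  also have "\<dots> = of_real (a\<^sup>2 * (norm \<xi>)\<^sup>2) * long_mode \<xi> w
      + (of_real (b\<^sup>2 - a\<^sup>2) * long_mode \<xi> w) * of_real ((norm \<xi>)\<^sup>2)
      + of_real (sym_pow (2 * \<theta>) \<xi>) * long_mode \<xi> v"
    unfolding sum.distrib sum_distrib_left[symmetric] sum_of_real_square_eq_norm_power2 by (simp add: long_mode_def)
  finally show ?thesis
    by (simp add: algebra_simps)
qed

lemma trans_mode_elastic_symbol:
  "trans_mode \<xi> k (elastic_symbol a b \<theta> \<xi> w v)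
     = of_real (a\<^sup>2 * (norm \<xi>)\<^sup>2) * trans_mode \<xi> k w + of_real (sym_pow (2 * \<theta>) \<xi>) * trans_mode \<xi> k v"
  by (simp add: trans_mode_def long_mode_elastic_symbol elastic_symbol_nth algebra_simps)

lemma is_solution_imp_solves_damped_osc:
  assumes sol: "is_solution a b \<theta> U0 U1 U V" and L: "bounded_linear L"
    and L_elastic: "\<And>w v. L (elastic_symbol a b \<theta> \<xi> w v) = of_real \<kappa> * L w + of_real (sym_pow (2 * \<theta>) \<xi>) * L v"
  shows "solves_damped_osc (sym_pow (2 * \<theta>) \<xi>) \<kappa> (\<lambda>t. L (U t \<xi>)) (\<lambda>t. L (V t \<xi>))"
  unfolding solves_damped_osc_def
proof (intro allI impI conjI)
  fix t :: real assume "0 \<le> t"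
  then have dU: "((\<lambda>t. U t \<xi>) has_vector_derivative V t \<xi>) (at t within {0..})"
    and dV: "((\<lambda>t. V t \<xi>) has_vector_derivative - elastic_symbol a b \<theta> \<xi> (U t \<xi>) (V t \<xi>))
      (at t within {0..})"
    using sol by (simp_all add: is_solution_def)
  show "((\<lambda>t. L (U t \<xi>)) has_vector_derivative L (V t \<xi>)) (at t within {0..})"
    by (rule bounded_linear.has_vector_derivative[OF L dU])
  show "((\<lambda>t. L (V t \<xi>)) has_vector_derivative
      - (of_real \<kappa> * L (U t \<xi>) + of_real (sym_pow (2 * \<theta>) \<xi>) * L (V t \<xi>))) (at t within {0..})"
    using bounded_linear.has_vector_derivative[OF L dV] by (simp add: linear_neg[OF bounded_linear.linear[OF L]] L_elastic)
qed

lemma norm_long_mode_le: "cmod (long_mode \<xi> w) \<le> norm \<xi> * norm w"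
proof -
  have "cmod (long_mode \<xi> w) \<le> (\<Sum>j\<in>UNIV. \<bar>norm (\<xi> $ j)\<bar> * \<bar>norm (w $ j)\<bar>)"
    unfolding long_mode_def by (rule order_trans[OF norm_sum]) (simp add: norm_mult)
  also have "\<dots> \<le> norm \<xi> * norm w"
    unfolding norm_vec_def by (rule L2_set_mult_ineq)
  finally show ?thesis .
qed

lemma norm_trans_mode_le: "cmod (trans_mode \<xi> k w) \<le> 2 * (norm \<xi>)\<^sup>2 * norm w"
proof -
  have "cmod (trans_mode \<xi> k w) \<le> (norm \<xi>)\<^sup>2 * cmod (w $ k) + \<bar>\<xi> $ k\<bar> * cmod (long_mode \<xi> w)"
    unfolding trans_mode_def by (rule order_trans[OF norm_triangle_ineq4]) (simp add: norm_mult norm_power)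
  also have "\<dots> \<le> (norm \<xi>)\<^sup>2 * norm w + norm \<xi> * (norm \<xi> * norm w)"
    by (intro add_mono mult_mono Finite_Cartesian_Product.norm_nth_le component_le_norm_cart norm_long_mode_le) auto
  finally show ?thesis
    by (simp add: power2_eq_square algebra_simps)
qed

lemma sym_pow_nonneg: "0 \<le> sym_pow r \<xi>"
  by (simp add: sym_pow_def)

lemma is_solution_mode_explicit:
  assumes sol: "is_solution a b \<theta> U0 U1 U V" and L: "bounded_linear L"
    and L_elastic: "\<And>w v. L (elastic_symbol a b \<theta> \<xi> w v) = of_real \<kappa> * L w + of_real (sym_pow (2 * \<theta>) \<xi>) * L v"
    and "0 < \<kappa>" "0 \<le> t"
  shows "L (U t \<xi>) = damped_osc_sol (sym_pow (2 * \<theta>) \<xi>) \<kappa> (L (U0 \<xi>)) (L (U1 \<xi>)) t"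
    and "L (V t \<xi>) = damped_osc_vel (sym_pow (2 * \<theta>) \<xi>) \<kappa> (L (U0 \<xi>)) (L (U1 \<xi>)) t"
proof -
  have "U 0 \<xi> = U0 \<xi>" "V 0 \<xi> = U1 \<xi>"
    using sol by (simp_all add: is_solution_def)
  with solves_damped_osc_unique[OF is_solution_imp_solves_damped_osc[OF sol L L_elastic]
      \<open>0 < \<kappa>\<close> sym_pow_nonneg \<open>0 \<le> t\<close>]
  show "L (U t \<xi>) = damped_osc_sol (sym_pow (2 * \<theta>) \<xi>) \<kappa> (L (U0 \<xi>)) (L (U1 \<xi>)) t"
    and "L (V t \<xi>) = damped_osc_vel (sym_pow (2 * \<theta>) \<xi>) \<kappa> (L (U0 \<xi>)) (L (U1 \<xi>)) t"
    by metis+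
qed

section \<open>Measurability in the frequency variable\<close>

lemma sym_pow_measurable [measurable]: "sym_pow r \<in> borel_measurable (lborel :: (real^3) measure)"
  unfolding sym_pow_def[abs_def] by measurable

lemma osc_cos_measurable [measurable]:
  assumes [measurable]: "g \<in> borel_measurable M"
  shows "(\<lambda>x. osc_cos (g x) t) \<in> borel_measurable M"
  unfolding osc_cos_def cosh_def by measurable

lemma osc_sin_measurable [measurable]:
  assumes [measurable]: "g \<in> borel_measurable M"
  shows "(\<lambda>x. osc_sin (g x) t) \<in> borel_measurable M"
  unfolding osc_sin_def sinh_def by measurable

lemma damped_cos_measurable [measurable]:
  assumes [measurable]: "d \<in> borel_measurable M" "\<kappa> \<in> borel_measurable M"
  shows "(\<lambda>x. damped_cos (d x) (\<kappa> x) t) \<in> borel_measurable M"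
  unfolding damped_cos_def by measurable

lemma damped_sin_measurable [measurable]:
  assumes [measurable]: "d \<in> borel_measurable M" "\<kappa> \<in> borel_measurable M"
  shows "(\<lambda>x. damped_sin (d x) (\<kappa> x) t) \<in> borel_measurable M"
  unfolding damped_sin_def by measurable

lemma damped_osc_sol_measurable [measurable]:
  assumes [measurable]: "d \<in> borel_measurable M" "\<kappa> \<in> borel_measurable M"
    "y0 \<in> borel_measurable M" "y1 \<in> borel_measurable M"
  shows "(\<lambda>x. damped_osc_sol (d x) (\<kappa> x) (y0 x) (y1 x) t) \<in> borel_measurable M"
  unfolding damped_osc_sol_def by measurable

lemma damped_osc_vel_measurable [measurable]:
  assumes [measurable]: "d \<in> borel_measurable M" "\<kappa> \<in> borel_measurable M"
    "y0 \<in> borel_measurable M" "y1 \<in> borel_measurable M"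
  shows "(\<lambda>x. damped_osc_vel (d x) (\<kappa> x) (y0 x) (y1 x) t) \<in> borel_measurable M"
  unfolding damped_osc_vel_def by measurable

lemma long_mode_measurable [measurable]:
  assumes [measurable]: "\<And>j. (\<lambda>\<xi>. w \<xi> $ j) \<in> borel_measurable (lborel :: (real^3) measure)"
  shows "(\<lambda>\<xi>. long_mode \<xi> (w \<xi>)) \<in> borel_measurable lborel"
  unfolding long_mode_def by measurable

lemma trans_mode_measurable [measurable]:
  assumes [measurable]: "\<And>j. (\<lambda>\<xi>. w \<xi> $ j) \<in> borel_measurable (lborel :: (real^3) measure)"
  shows "(\<lambda>\<xi>. trans_mode \<xi> k (w \<xi>)) \<in> borel_measurable lborel"
  unfolding trans_mode_def by measurable

text \<open>\<open>is_solution\<close> constrains \<open>U\<close> only frequency by frequency; measurability in \<open>\<xi>\<close> comes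
  from this explicit formula.\<close>
lemma is_solution_explicit:
  assumes sol: "is_solution a b \<theta> U0 U1 U V" and "0 < a\<^sup>2" "0 < b\<^sup>2" "\<xi> \<noteq> 0" "0 \<le> t"
  defines "d \<equiv> sym_pow (2 * \<theta>) \<xi>" and "\<kappa>a \<equiv> a\<^sup>2 * (norm \<xi>)\<^sup>2" and "\<kappa>b \<equiv> b\<^sup>2 * (norm \<xi>)\<^sup>2"
  shows "U t \<xi> $ k =
      (damped_osc_sol d \<kappa>a (trans_mode \<xi> k (U0 \<xi>)) (trans_mode \<xi> k (U1 \<xi>)) t
       + of_real (\<xi> $ k) * damped_osc_sol d \<kappa>b (long_mode \<xi> (U0 \<xi>)) (long_mode \<xi> (U1 \<xi>)) t)
      / of_real ((norm \<xi>)\<^sup>2)"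
    and "V t \<xi> $ k =
      (damped_osc_vel d \<kappa>a (trans_mode \<xi> k (U0 \<xi>)) (trans_mode \<xi> k (U1 \<xi>)) t
       + of_real (\<xi> $ k) * damped_osc_vel d \<kappa>b (long_mode \<xi> (U0 \<xi>)) (long_mode \<xi> (U1 \<xi>)) t)
      / of_real ((norm \<xi>)\<^sup>2)"
proof -
  have "0 < \<kappa>a" "0 < \<kappa>b"
    using assms by (simp_all add: \<kappa>a_def \<kappa>b_def)
  note trans = is_solution_mode_explicit[OF sol bounded_linear_trans_mode trans_mode_elastic_symbol \<open>0 < \<kappa>a\<close>[unfolded \<kappa>a_def] \<open>0 \<le> t\<close>]
  note long = is_solution_mode_explicit[OF sol bounded_linear_long_mode long_mode_elastic_symbol \<open>0 < \<kappa>b\<close>[unfolded \<kappa>b_def] \<open>0 \<le> t\<close>]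
  have recombine: "w $ k = (trans_mode \<xi> k w + of_real (\<xi> $ k) * long_mode \<xi> w) / of_real ((norm \<xi>)\<^sup>2)" for w
    using \<open>\<xi> \<noteq> 0\<close> by (simp add: trans_mode_recombine[symmetric])
  show "U t \<xi> $ k = (damped_osc_sol d \<kappa>a (trans_mode \<xi> k (U0 \<xi>)) (trans_mode \<xi> k (U1 \<xi>)) t
       + of_real (\<xi> $ k) * damped_osc_sol d \<kappa>b (long_mode \<xi> (U0 \<xi>)) (long_mode \<xi> (U1 \<xi>)) t)
      / of_real ((norm \<xi>)\<^sup>2)"
    by (subst recombine) (simp add: trans long d_def \<kappa>a_def \<kappa>b_def)
  show "V t \<xi> $ k =
      (damped_osc_vel d \<kappa>a (trans_mode \<xi> k (U0 \<xi>)) (trans_mode \<xi> k (U1 \<xi>)) t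
       + of_real (\<xi> $ k) * damped_osc_vel d \<kappa>b (long_mode \<xi> (U0 \<xi>)) (long_mode \<xi> (U1 \<xi>)) t)
      / of_real ((norm \<xi>)\<^sup>2)"
    by (subst recombine) (simp add: trans long d_def \<kappa>a_def \<kappa>b_def)
qed

lemma measurable_if_eq_off_zero:
  fixes f g :: "'a::euclidean_space \<Rightarrow> 'b::topological_space"
  assumes "\<And>\<xi>. \<xi> \<noteq> 0 \<Longrightarrow> f \<xi> = g \<xi>" and [measurable]: "g \<in> borel_measurable lborel"
  shows "f \<in> borel_measurable lborel"
proof -
  have "f = (\<lambda>\<xi>. if \<xi> = 0 then f 0 else g \<xi>)"
    using assms(1) by auto
  also have "\<dots> \<in> borel_measurable lborel"
    by measurable
  finally show ?thesis .
qed

lemma is_solution_measurable: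
  assumes sol: "is_solution a b \<theta> U0 U1 U V" and "0 < a\<^sup>2" "a\<^sup>2 \<le> b\<^sup>2" and t: "0 \<le> t"
    and [measurable]: "\<And>j. (\<lambda>\<xi>. U0 \<xi> $ j) \<in> borel_measurable lborel"
      "\<And>j. (\<lambda>\<xi>. U1 \<xi> $ j) \<in> borel_measurable lborel"
  shows "(\<lambda>\<xi>. U t \<xi> $ k) \<in> borel_measurable lborel" and "(\<lambda>\<xi>. V t \<xi> $ k) \<in> borel_measurable lborel"
proof -
  have ab: "0 < a\<^sup>2" "0 < b\<^sup>2"
    using assms(2,3) by linarith+
  show "(\<lambda>\<xi>. U t \<xi> $ k) \<in> borel_measurable lborel"
    by (rule measurable_if_eq_off_zero[OF is_solution_explicit(1)[OF sol ab _ t]]) measurable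
  show "(\<lambda>\<xi>. V t \<xi> $ k) \<in> borel_measurable lborel"
    by (rule measurable_if_eq_off_zero[OF is_solution_explicit(2)[OF sol ab _ t]]) measurable
qed

section \<open>A frequency-dependent decay rate\<close>

lemma admissible_rate_low_freq:
  assumes r: "0 < r" "r \<le> 1" and c: "0 < c" "2 * c \<le> 1" "c\<^sup>2 \<le> A" "c \<le> A"
    and q: "1 \<le> q" "2 * \<theta> \<le> q" "2 \<le> q + 2 * \<theta>"
  shows "admissible_rate (c * r powr q) (A * r\<^sup>2) (r powr (2 * \<theta>))"
proof -
  have r2: "r\<^sup>2 = r powr 2"
    using r by (simp add: powr_numeral)
  have "r powr q \<le> r powr 1"
    using r q by (intro powr_mono') auto
  then have "(r powr q)\<^sup>2 \<le> r\<^sup>2"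
    using r by (intro power_mono) auto
  then have "c\<^sup>2 * (r powr q)\<^sup>2 \<le> A * r\<^sup>2"
    using c by (intro mult_mono) auto
  then have 1: "(c * r powr q)\<^sup>2 \<le> A * r\<^sup>2"
    by (simp add: power_mult_distrib)
  have "2 * (c * r powr q) \<le> r powr q"
    using c by (simp add: mult.assoc[symmetric] mult_left_le_one_le)
  also have "\<dots> \<le> r powr (2 * \<theta>)"
    using r q by (intro powr_mono') auto
  finally have 2: "2 * (c * r powr q) \<le> r powr (2 * \<theta>)" .
  have "c * r powr q * r powr (2 * \<theta>) = c * r powr (q + 2 * \<theta>)"
    by (simp add: powr_add)
  also have "\<dots> \<le> A * r powr 2"
    using r q c by (intro mult_mono powr_mono') auto
  finally have 3: "c * r powr q * r powr (2 * \<theta>) \<le> A * r\<^sup>2"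
    using r2 by simp
  show ?thesis
    using 1 2 3 c r by (simp add: admissible_rate_def)
qed

lemma admissible_rate_high_freq:
  assumes r: "1 \<le> r" and c: "0 < c" "2 * c \<le> 1" "c\<^sup>2 \<le> A" "c \<le> A" and \<theta>: "0 \<le> \<theta>" "\<theta> \<le> 1"
  shows "admissible_rate c (A * r\<^sup>2) (r powr (2 * \<theta>))"
proof -
  have "c\<^sup>2 \<le> A * r\<^sup>2"
    using c r by (metis mult_left_mono mult.right_neutral one_le_power order_trans dual_order.trans
        zero_le_power2)
  moreover have "2 * c \<le> r powr (2 * \<theta>)"
    using c r \<theta> ge_one_powr_ge_zero[of r "2 * \<theta>"] by linarith
  moreover have "c * r powr (2 * \<theta>) \<le> A * r powr 2"
    using c r \<theta> by (intro mult_mono powr_mono) auto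
  ultimately show ?thesis
    using c r by (simp add: admissible_rate_def powr_numeral)
qed

definition decay_const :: "real \<Rightarrow> real" where
  "decay_const a = min (1 / 2) (min \<bar>a\<bar> (a\<^sup>2))"

text \<open>At low frequencies the rate is of order \<open>|\<xi>|^(2 max (1 - \<theta>) \<theta>)\<close>: there either the damping
  \<open>|\<xi>|^(2 \<theta>)\<close> or the ratio \<open>|\<xi>|^(2 - 2 \<theta>)\<close> of stiffness to damping is the bottleneck.\<close>
definition decay_rate :: "real \<Rightarrow> real \<Rightarrow> real^3 \<Rightarrow> real" where
  "decay_rate a \<theta> \<xi> = decay_const a * min (norm \<xi> powr (2 * max (1 - \<theta>) \<theta>)) 1"

lemma admissible_decay_rate:
  assumes a: "0 < a\<^sup>2" and \<theta>: "0 \<le> \<theta>" "\<theta> \<le> 1" and "\<xi> \<noteq> 0"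
  shows "admissible_rate (decay_rate a \<theta> \<xi>) (a\<^sup>2 * (norm \<xi>)\<^sup>2) (sym_pow (2 * \<theta>) \<xi>)"
proof -
  define r where "r = norm \<xi>"
  define q where "q = 2 * max (1 - \<theta>) \<theta>"
  have r: "0 < r" using \<open>\<xi> \<noteq> 0\<close> by (simp add: r_def)
  have q: "1 \<le> q" "2 * \<theta> \<le> q" "2 \<le> q + 2 * \<theta>"
    by (auto simp: q_def max_def)
  have c0: "0 < decay_const a" "decay_const a \<le> \<bar>a\<bar>" "decay_const a \<le> 1 / 2" "decay_const a \<le> a\<^sup>2"
    using a by (simp_all add: decay_const_def min_le_iff_disj)
  then have "(decay_const a)\<^sup>2 \<le> \<bar>a\<bar>\<^sup>2"
    by (intro power_mono) auto
  then have c: "0 < decay_const a" "2 * decay_const a \<le> 1" "(decay_const a)\<^sup>2 \<le> a\<^sup>2" "decay_const a \<le> a\<^sup>2"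
    using c0 by simp_all
  have "sym_pow (2 * \<theta>) \<xi> = r powr (2 * \<theta>)"
    using \<open>\<xi> \<noteq> 0\<close> by (simp add: sym_pow_def r_def)
  moreover have "admissible_rate (decay_rate a \<theta> \<xi>) (a\<^sup>2 * r\<^sup>2) (r powr (2 * \<theta>))"
  proof (cases "r \<le> 1")
    case True
    then have "decay_rate a \<theta> \<xi> = decay_const a * r powr q"
      using r q by (simp add: decay_rate_def r_def q_def powr_le1)
    then show ?thesis
      using admissible_rate_low_freq[OF r True c q] by simp
  next
    case False
    then have "decay_rate a \<theta> \<xi> = decay_const a"
      using q by (simp add: decay_rate_def r_def q_def ge_one_powr_ge_zero)
    then show ?thesis
      using admissible_rate_high_freq[OF _ c \<theta>] False by simp
  qed
  ultimately show ?thesis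
    by (simp add: r_def)
qed

lemma powr_mult_exp_neg_le:
  fixes y p c :: real
  assumes "0 < y" "0 \<le> p" "0 < c"
  shows "y powr p * exp (- c * y) \<le> max 1 ((p / c) powr p)"
proof (cases "p = 0")
  case True
  then show ?thesis
    using assms by simp
next
  case False
  then have p: "0 < p" using assms by simp
  have "c * y / p \<le> exp (c * y / p)"
    using exp_ge_add_one_self[of "c * y / p"] by linarith
  then have "(c * y / p) powr p \<le> exp (c * y / p) powr p"
    using assms p by (intro powr_mono2) auto
  also have "\<dots> = exp (c * y)"
    using p by (simp add: exp_powr_real)
  finally have "(c * y / p) powr p * exp (- c * y) \<le> 1"
    by (simp add: exp_minus field_simps)
  moreover have "y powr p = (p / c) powr p * (c * y / p) powr p"
    using assms p by (simp add: powr_mult[symmetric])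
  ultimately have "y powr p * exp (- c * y) \<le> (p / c) powr p"
    by (metis mult.assoc mult_left_le powr_ge_zero)
  then show ?thesis
    by simp
qed

lemma powr_le_min_powr_mult:
  fixes r s q :: real
  assumes "0 < r" "0 \<le> s" "0 < q"
  shows "r powr (2 * s) \<le> min (r powr q) 1 powr (2 * s / q) * (1 + r\<^sup>2) powr s"
proof (cases "r \<le> 1")
  case True
  then have "min (r powr q) 1 powr (2 * s / q) = r powr (2 * s)"
    using assms by (simp add: powr_le1 powr_powr)
  moreover have "1 \<le> (1 + r\<^sup>2) powr s"
    using assms by (intro ge_one_powr_ge_zero) auto
  ultimately show ?thesis
    using assms by (simp add: mult_le_cancel_left1)
next
  case False
  then have "min (r powr q) 1 = 1"
    using assms by (simp add: ge_one_powr_ge_zero)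
  moreover have "r powr (2 * s) = (r\<^sup>2) powr s"
    using assms by (simp add: powr_powr[symmetric] powr_numeral)
  moreover have "(r\<^sup>2) powr s \<le> (1 + r\<^sup>2) powr s"
    using assms by (intro powr_mono2) auto
  ultimately show ?thesis
    by simp
qed

lemma powr_mult_exp_decay_le:
  fixes \<mu> c p t :: real
  assumes \<mu>: "0 < \<mu>" "\<mu> \<le> 1" and "0 < c" "0 \<le> p" "0 \<le> t"
  shows "\<mu> powr p * exp (- c * \<mu> * t) \<le> exp c * max 1 ((p / c) powr p) * (1 + t) powr (- p)"
proof -
  have "exp (- c * \<mu> * t) = exp (c * \<mu>) * exp (- c * (\<mu> * (1 + t)))"
    by (simp add: algebra_simps flip: exp_add)
  also have "\<dots> \<le> exp c * exp (- c * (\<mu> * (1 + t)))"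
    using assms by (simp add: mult_left_le)
  finally have "\<mu> powr p * exp (- c * \<mu> * t) \<le> \<mu> powr p * (exp c * exp (- c * (\<mu> * (1 + t))))"
    by (rule mult_left_mono) simp
  also have "\<dots> = exp c * (\<mu> powr p * exp (- c * (\<mu> * (1 + t))))"
    by (simp add: mult_ac)
  also have "\<dots> = exp c * ((\<mu> * (1 + t)) powr p * exp (- c * (\<mu> * (1 + t)))) * (1 + t) powr (- p)"
    using assms by (simp add: powr_mult mult_ac flip: powr_add)
  also have "\<dots> \<le> exp c * max 1 ((p / c) powr p) * (1 + t) powr (- p)"
    using assms by (intro mult_right_mono mult_left_mono powr_mult_exp_neg_le) auto
  finally show ?thesis .
qed

definition weight_const :: "real \<Rightarrow> real \<Rightarrow> real \<Rightarrow> real" where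
  "weight_const a \<theta> s =
     (let c = decay_const a / 3; p = s / max (1 - \<theta>) \<theta> in exp c * max 1 ((p / c) powr p))"

lemma weight_const_nonneg: "0 \<le> weight_const a \<theta> s"
  by (simp add: weight_const_def Let_def)

lemma decay_weight_le:
  assumes a: "0 < a\<^sup>2" and \<theta>: "0 \<le> \<theta>" "\<theta> \<le> 1" and s: "0 \<le> s" and t: "0 \<le> t" and "\<xi> \<noteq> 0"
  shows "(sym_pow s \<xi>)\<^sup>2 * exp (- decay_rate a \<theta> \<xi> * t / 3)
    \<le> weight_const a \<theta> s * (1 + t) powr (- s / max (1 - \<theta>) \<theta>) * (1 + (norm \<xi>)\<^sup>2) powr s"
proof -
  define r m c p where "r = norm \<xi>" and "m = max (1 - \<theta>) \<theta>" and "c = decay_const a / 3" and "p = s / m"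
  define \<mu> where "\<mu> = min (r powr (2 * m)) 1"
  have r: "0 < r" using \<open>\<xi> \<noteq> 0\<close> by (simp add: r_def)
  have m: "0 < m" by (auto simp: m_def max_def)
  have "(sym_pow s \<xi>)\<^sup>2 = r powr (2 * s)"
    using r by (simp add: sym_pow_def r_def power2_eq_square flip: powr_add)
  also have "\<dots> \<le> \<mu> powr p * (1 + r\<^sup>2) powr s"
    using powr_le_min_powr_mult[OF r s, of "2 * m"] m by (simp add: \<mu>_def p_def)
  finally have "(sym_pow s \<xi>)\<^sup>2 * exp (- decay_rate a \<theta> \<xi> * t / 3)
      \<le> (\<mu> powr p * exp (- c * \<mu> * t)) * (1 + r\<^sup>2) powr s"
    by (simp add: decay_rate_def c_def \<mu>_def r_def m_def mult_right_mono mult_ac)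
  also have "\<dots> \<le> (exp c * max 1 ((p / c) powr p) * (1 + t) powr (- p)) * (1 + r\<^sup>2) powr s"
    using r m a s t
    by (intro mult_right_mono powr_mult_exp_decay_le) (auto simp: \<mu>_def c_def p_def decay_const_def)
  finally show ?thesis
    by (simp add: weight_const_def Let_def r_def p_def m_def c_def)
qed

section \<open>Pointwise estimates\<close>

lemma norm_add_mult_power2_le:
  fixes x y c :: complex
  assumes "cmod c \<le> r"
  shows "(cmod (x + c * y))\<^sup>2 \<le> 2 * (cmod x)\<^sup>2 + 2 * r\<^sup>2 * (cmod y)\<^sup>2"
proof -
  have "cmod (x + c * y) \<le> cmod x + r * cmod y"
    using assms by (intro order_trans[OF norm_triangle_ineq]) (simp add: norm_mult mult_right_mono)
  then have "(cmod (x + c * y))\<^sup>2 \<le> (cmod x + r * cmod y)\<^sup>2"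
    by (intro power_mono) auto
  also have "\<dots> \<le> 2 * (cmod x)\<^sup>2 + 2 * (r * cmod y)\<^sup>2"
    using sum_squares_bound[of "cmod x" "r * cmod y"] by (simp add: power2_sum)
  finally show ?thesis
    by (simp add: power_mult_distrib)
qed

lemma recombined_energy_le:
  fixes u v z w p q c :: complex
  assumes "0 \<le> r" "cmod c \<le> r"
    and "of_real (r\<^sup>2) * u = z + c * p" "of_real (r\<^sup>2) * v = w + c * q"
  shows "r ^ 4 * (r\<^sup>2 * (cmod u)\<^sup>2 + (cmod v)\<^sup>2)
    \<le> 2 * (r\<^sup>2 * (cmod z)\<^sup>2 + (cmod w)\<^sup>2) + 2 * r\<^sup>2 * (r\<^sup>2 * (cmod p)\<^sup>2 + (cmod q)\<^sup>2)"
proof -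
  have "cmod (of_real (r\<^sup>2) * x) = r\<^sup>2 * cmod x" for x :: complex
    by (simp add: norm_mult del: of_real_power)
  then have "r ^ 4 * (cmod u)\<^sup>2 = (cmod (of_real (r\<^sup>2) * u))\<^sup>2"
    "r ^ 4 * (cmod v)\<^sup>2 = (cmod (of_real (r\<^sup>2) * v))\<^sup>2"
    by (simp_all add: power_mult_distrib flip: power_mult)
  then have "r ^ 4 * (cmod u)\<^sup>2 \<le> 2 * (cmod z)\<^sup>2 + 2 * r\<^sup>2 * (cmod p)\<^sup>2"
    and "r ^ 4 * (cmod v)\<^sup>2 \<le> 2 * (cmod w)\<^sup>2 + 2 * r\<^sup>2 * (cmod q)\<^sup>2"
    using assms norm_add_mult_power2_le by simp_all
  then have "r\<^sup>2 * (r ^ 4 * (cmod u)\<^sup>2) + r ^ 4 * (cmod v)\<^sup>2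
      \<le> r\<^sup>2 * (2 * (cmod z)\<^sup>2 + 2 * r\<^sup>2 * (cmod p)\<^sup>2) + (2 * (cmod w)\<^sup>2 + 2 * r\<^sup>2 * (cmod q)\<^sup>2)"
    by (intro add_mono mult_left_mono) auto
  then show ?thesis
    by (simp add: algebra_simps)
qed

lemma add_le_weighted_energy:
  fixes x y A :: real
  assumes "0 \<le> x" "0 \<le> y" "0 < A"
  shows "x + y \<le> (1 / A + 1) * (y + A * x)"
proof -
  have "0 \<le> y / A + A * x"
    using assms by simp
  then show ?thesis
    using assms by (simp add: field_simps)
qed

lemma initial_energy_le:
  fixes x0 x1 :: complex
  assumes "cmod x0 \<le> \<rho> * n0" "cmod x1 \<le> \<rho> * n1" "0 \<le> A"
  shows "(cmod x1)\<^sup>2 + A * r\<^sup>2 * (cmod x0)\<^sup>2 \<le> \<rho>\<^sup>2 * (1 + A) * (n1\<^sup>2 + r\<^sup>2 * n0\<^sup>2)"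
proof -
  have "(cmod x0)\<^sup>2 \<le> (\<rho> * n0)\<^sup>2" "(cmod x1)\<^sup>2 \<le> (\<rho> * n1)\<^sup>2"
    using assms by (auto intro!: power_mono)
  then have "(cmod x1)\<^sup>2 + A * r\<^sup>2 * (cmod x0)\<^sup>2 \<le> (\<rho> * n1)\<^sup>2 + A * r\<^sup>2 * (\<rho> * n0)\<^sup>2"
    using assms by (intro add_mono mult_left_mono) auto
  also have "\<dots> \<le> \<rho>\<^sup>2 * (1 + A) * (n1\<^sup>2 + r\<^sup>2 * n0\<^sup>2)"
    using assms by (simp add: algebra_simps power_mult_distrib)
  finally show ?thesis .
qed

lemma is_solution_mode_energy_le:
  assumes sol: "is_solution a b \<theta> U0 U1 U V" and L: "bounded_linear L"
    and L_elastic: "\<And>w v. L (elastic_symbol a b \<theta> \<xi> w v)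
      = of_real (A * (norm \<xi>)\<^sup>2) * L w + of_real (sym_pow (2 * \<theta>) \<xi>) * L v"
    and L_le: "\<And>w. cmod (L w) \<le> \<rho> * norm w" and "0 \<le> A"
    and \<delta>: "admissible_rate \<delta> (A * (norm \<xi>)\<^sup>2) (sym_pow (2 * \<theta>) \<xi>)" and "0 \<le> t"
  shows "(cmod (L (V t \<xi>)))\<^sup>2 + A * (norm \<xi>)\<^sup>2 * (cmod (L (U t \<xi>)))\<^sup>2
    \<le> 3 * exp (- \<delta> * t / 3) * (\<rho>\<^sup>2 * (1 + A) * ((norm (U1 \<xi>))\<^sup>2 + (norm \<xi>)\<^sup>2 * (norm (U0 \<xi>))\<^sup>2))"
proof -
  have "U 0 \<xi> = U0 \<xi>" "V 0 \<xi> = U1 \<xi>"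
    using sol by (simp_all add: is_solution_def)
  with damped_osc_energy_decay[OF is_solution_imp_solves_damped_osc[OF sol L L_elastic] \<delta> \<open>0 \<le> t\<close>]
  have "(cmod (L (V t \<xi>)))\<^sup>2 + A * (norm \<xi>)\<^sup>2 * (cmod (L (U t \<xi>)))\<^sup>2
      \<le> 3 * exp (- \<delta> * t / 3) * ((cmod (L (U1 \<xi>)))\<^sup>2 + A * (norm \<xi>)\<^sup>2 * (cmod (L (U0 \<xi>)))\<^sup>2)"
    by (simp add: mult.assoc)
  also have "\<dots> \<le> 3 * exp (- \<delta> * t / 3) * (\<rho>\<^sup>2 * (1 + A) * ((norm (U1 \<xi>))\<^sup>2 + (norm \<xi>)\<^sup>2 * (norm (U0 \<xi>))\<^sup>2))"
    using \<open>0 \<le> A\<close> by (intro mult_left_mono initial_energy_le L_le) auto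
  finally show ?thesis .
qed

definition energy_const :: "real \<Rightarrow> real \<Rightarrow> real" where
  "energy_const A B = 24 * (1 / A + 1) * (1 + A) + 6 * (1 / B + 1) * (1 + B)"

lemma energy_const_nonneg: "0 < A \<Longrightarrow> 0 < B \<Longrightarrow> 0 \<le> energy_const A B"
  by (simp add: energy_const_def)

lemma is_solution_energy_estimate:
  assumes sol: "is_solution a b \<theta> U0 U1 U V" and ab: "0 < a\<^sup>2" "a\<^sup>2 \<le> b\<^sup>2" and "\<xi> \<noteq> 0"
    and \<delta>: "admissible_rate \<delta> (a\<^sup>2 * (norm \<xi>)\<^sup>2) (sym_pow (2 * \<theta>) \<xi>)" and t: "0 \<le> t"
  shows "(norm \<xi>)\<^sup>2 * (cmod (U t \<xi> $ k))\<^sup>2 + (cmod (V t \<xi> $ k))\<^sup>2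
    \<le> energy_const (a\<^sup>2) (b\<^sup>2) * exp (- \<delta> * t / 3) * ((norm (U1 \<xi>))\<^sup>2 + (norm \<xi>)\<^sup>2 * (norm (U0 \<xi>))\<^sup>2)"
proof -
  define r e N where "r = norm \<xi>" and "e = exp (- \<delta> * t / 3)"
    and "N = (norm (U1 \<xi>))\<^sup>2 + (norm \<xi>)\<^sup>2 * (norm (U0 \<xi>))\<^sup>2"
  define Z W P Q where "Z = trans_mode \<xi> k (U t \<xi>)" and "W = trans_mode \<xi> k (V t \<xi>)"
    and "P = long_mode \<xi> (U t \<xi>)" and "Q = long_mode \<xi> (V t \<xi>)"
  have r: "0 < r" using \<open>\<xi> \<noteq> 0\<close> by (simp add: r_def)
  have b: "0 < b\<^sup>2" using ab by linarith
  have "admissible_rate \<delta> (b\<^sup>2 * (norm \<xi>)\<^sup>2) (sym_pow (2 * \<theta>) \<xi>)"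
    using ab by (intro admissible_rate_mono[OF \<delta>] mult_right_mono) auto
  note EP = is_solution_mode_energy_le[OF sol bounded_linear_long_mode long_mode_elastic_symbol
      norm_long_mode_le _ this t, folded P_def Q_def N_def e_def r_def]
  note EZ = is_solution_mode_energy_le[OF sol bounded_linear_trans_mode[of \<xi> k] trans_mode_elastic_symbol
      norm_trans_mode_le _ \<delta> t, folded Z_def W_def N_def e_def r_def]
  have "r ^ 4 * (r\<^sup>2 * (cmod (U t \<xi> $ k))\<^sup>2 + (cmod (V t \<xi> $ k))\<^sup>2)
      \<le> 2 * (r\<^sup>2 * (cmod Z)\<^sup>2 + (cmod W)\<^sup>2) + 2 * r\<^sup>2 * (r\<^sup>2 * (cmod P)\<^sup>2 + (cmod Q)\<^sup>2)"
    using r unfolding Z_def W_def P_def Q_def r_def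
    by (intro recombined_energy_le[where c = "of_real (\<xi> $ k)"] trans_mode_recombine)
      (simp_all add: component_le_norm_cart)
  also have "\<dots> \<le> 2 * ((1 / a\<^sup>2 + 1) * ((cmod W)\<^sup>2 + a\<^sup>2 * r\<^sup>2 * (cmod Z)\<^sup>2))
      + 2 * r\<^sup>2 * ((1 / b\<^sup>2 + 1) * ((cmod Q)\<^sup>2 + b\<^sup>2 * r\<^sup>2 * (cmod P)\<^sup>2))"
    using ab b by (intro add_mono mult_left_mono) (auto simp: mult.assoc intro: add_le_weighted_energy)
  also have "\<dots> \<le> 2 * ((1 / a\<^sup>2 + 1) * (3 * e * ((2 * r\<^sup>2)\<^sup>2 * (1 + a\<^sup>2) * N)))
      + 2 * r\<^sup>2 * ((1 / b\<^sup>2 + 1) * (3 * e * (r\<^sup>2 * (1 + b\<^sup>2) * N)))"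
    using EZ EP ab b by (intro add_mono mult_left_mono) auto
  also have "\<dots> = r ^ 4 * (energy_const (a\<^sup>2) (b\<^sup>2) * e * N)"
    using ab b by (simp add: energy_const_def power4_eq_xxxx field_simps)
  finally show ?thesis
    using r by (simp add: r_def e_def N_def mult_le_cancel_left_pos)
qed

definition data_density :: "real \<Rightarrow> (real^3 \<Rightarrow> complex^3) \<Rightarrow> (real^3 \<Rightarrow> complex^3) \<Rightarrow> real^3 \<Rightarrow> real" where
  "data_density \<sigma> U0 U1 \<xi> =
     (1 + (norm \<xi>)\<^sup>2) powr \<sigma> * ((1 + (norm \<xi>)\<^sup>2) * (norm (U0 \<xi>))\<^sup>2 + (norm (U1 \<xi>))\<^sup>2)"

lemma data_density_0:
  "data_density 0 U0 U1 \<xi> = (1 + (norm \<xi>)\<^sup>2) * (norm (U0 \<xi>))\<^sup>2 + (norm (U1 \<xi>))\<^sup>2"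
  by (simp add: data_density_def add_nonneg_eq_0_iff)

lemma is_solution_decay_pointwise:
  assumes sol: "is_solution a b \<theta> U0 U1 U V" and ab: "0 < a\<^sup>2" "a\<^sup>2 \<le> b\<^sup>2"
    and \<theta>: "0 \<le> \<theta>" "\<theta> \<le> 1" and s: "0 \<le> s" and "\<xi> \<noteq> 0" and t: "0 \<le> t"
  shows "(sym_pow (s + 1) \<xi>)\<^sup>2 * (cmod (U t \<xi> $ k))\<^sup>2 + (sym_pow s \<xi>)\<^sup>2 * (cmod (V t \<xi> $ k))\<^sup>2
    \<le> energy_const (a\<^sup>2) (b\<^sup>2) * weight_const a \<theta> s * (1 + t) powr (- s / max (1 - \<theta>) \<theta>)
       * data_density s U0 U1 \<xi>"
proof -
  define K r w e N where "K = energy_const (a\<^sup>2) (b\<^sup>2)" and "r = norm \<xi>" and "w = (sym_pow s \<xi>)\<^sup>2"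
    and "e = exp (- decay_rate a \<theta> \<xi> * t / 3)" and "N = (norm (U1 \<xi>))\<^sup>2 + r\<^sup>2 * (norm (U0 \<xi>))\<^sup>2"
  have K: "0 \<le> K" using ab unfolding K_def by (intro energy_const_nonneg) auto
  have "sym_pow (s + 1) \<xi> = r * sym_pow s \<xi>"
    using \<open>\<xi> \<noteq> 0\<close> s by (simp add: sym_pow_def powr_add r_def)
  then have "(sym_pow (s + 1) \<xi>)\<^sup>2 * (cmod (U t \<xi> $ k))\<^sup>2 + (sym_pow s \<xi>)\<^sup>2 * (cmod (V t \<xi> $ k))\<^sup>2
      = w * (r\<^sup>2 * (cmod (U t \<xi> $ k))\<^sup>2 + (cmod (V t \<xi> $ k))\<^sup>2)"
    by (simp add: w_def power_mult_distrib algebra_simps)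
  also have "\<dots> \<le> w * (K * e * N)"
    using is_solution_energy_estimate[OF sol ab \<open>\<xi> \<noteq> 0\<close> admissible_decay_rate[OF ab(1) \<theta> \<open>\<xi> \<noteq> 0\<close>] t]
    by (intro mult_left_mono) (simp_all add: K_def e_def N_def r_def w_def)
  also have "\<dots> = K * (w * e) * N"
    by (simp add: mult_ac)
  also have "\<dots> \<le> K * (weight_const a \<theta> s * (1 + t) powr (- s / max (1 - \<theta>) \<theta>) * (1 + r\<^sup>2) powr s)
      * ((1 + r\<^sup>2) * (norm (U0 \<xi>))\<^sup>2 + (norm (U1 \<xi>))\<^sup>2)"
  proof (rule mult_mono[OF mult_left_mono[OF _ K]])
    show "w * e \<le> weight_const a \<theta> s * (1 + t) powr (- s / max (1 - \<theta>) \<theta>) * (1 + r\<^sup>2) powr s"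
      using decay_weight_le[OF ab(1) \<theta> s t \<open>\<xi> \<noteq> 0\<close>] by (simp add: w_def e_def r_def)
    show "N \<le> (1 + r\<^sup>2) * (norm (U0 \<xi>))\<^sup>2 + (norm (U1 \<xi>))\<^sup>2"
      by (simp add: N_def algebra_simps)
  qed (use K weight_const_nonneg in \<open>auto simp: N_def\<close>)
  finally show ?thesis
    by (simp add: K_def data_density_def r_def mult_ac)
qed

lemma has_vector_derivative_bound_imp_norm_diff_le:
  fixes u u' :: "real \<Rightarrow> 'a::real_normed_vector"
  assumes "\<And>\<tau>. 0 \<le> \<tau> \<Longrightarrow> \<tau> \<le> t \<Longrightarrow> (u has_vector_derivative u' \<tau>) (at \<tau> within {0..})"
    and "\<And>\<tau>. 0 \<le> \<tau> \<Longrightarrow> \<tau> \<le> t \<Longrightarrow> norm (u' \<tau>) \<le> M" and "0 \<le> t"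
  shows "norm (u t - u 0) \<le> M * t"
proof -
  have "norm (u t - u 0) \<le> M * norm (t - 0)"
  proof (rule differentiable_bound[where S = "{0..t}" and f' = "\<lambda>\<tau> h. h *\<^sub>R u' \<tau>"])
    fix \<tau> assume \<tau>: "\<tau> \<in> {0..t}"
    then have "(u has_vector_derivative u' \<tau>) (at \<tau> within {0..t})"
      by (intro has_vector_derivative_within_subset[OF assms(1)]) auto
    then show "(u has_derivative (\<lambda>h. h *\<^sub>R u' \<tau>)) (at \<tau> within {0..t})"
      by (simp add: has_vector_derivative_def)
    show "onorm (\<lambda>h. h *\<^sub>R u' \<tau>) \<le> M"
      using assms(2) \<tau> by (simp add: onorm_scaleR_left onorm_id)
  qed (use assms(3) in auto)
  then show ?thesis
    using assms(3) by simp
qed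

lemma is_solution_velocity_le:
  assumes sol: "is_solution a b \<theta> U0 U1 U V" and ab: "0 < a\<^sup>2" "a\<^sup>2 \<le> b\<^sup>2" and "\<xi> \<noteq> 0" and "0 \<le> t"
  shows "(cmod (V t \<xi> $ k))\<^sup>2 \<le> energy_const (a\<^sup>2) (b\<^sup>2) * data_density 0 U0 U1 \<xi>"
proof -
  have "admissible_rate 0 (a\<^sup>2 * (norm \<xi>)\<^sup>2) (sym_pow (2 * \<theta>) \<xi>)"
    by (simp add: admissible_rate_zero sym_pow_nonneg)
  from is_solution_energy_estimate[OF sol ab \<open>\<xi> \<noteq> 0\<close> this \<open>0 \<le> t\<close>, of k]
  have "(norm \<xi>)\<^sup>2 * (cmod (U t \<xi> $ k))\<^sup>2 + (cmod (V t \<xi> $ k))\<^sup>2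
      \<le> energy_const (a\<^sup>2) (b\<^sup>2) * ((norm (U1 \<xi>))\<^sup>2 + (norm \<xi>)\<^sup>2 * (norm (U0 \<xi>))\<^sup>2)"
    by simp
  also have "\<dots> \<le> energy_const (a\<^sup>2) (b\<^sup>2) * data_density 0 U0 U1 \<xi>"
    using ab by (intro mult_left_mono energy_const_nonneg) (auto simp: data_density_0 algebra_simps)
  finally have "(norm \<xi>)\<^sup>2 * (cmod (U t \<xi> $ k))\<^sup>2 + (cmod (V t \<xi> $ k))\<^sup>2
      \<le> energy_const (a\<^sup>2) (b\<^sup>2) * data_density 0 U0 U1 \<xi>" .
  moreover have "0 \<le> (norm \<xi>)\<^sup>2 * (cmod (U t \<xi> $ k))\<^sup>2"
    by simp
  ultimately show ?thesis
    by linarith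
qed

lemma power2_add_sqrt_mult_le:
  fixes n K N t :: real
  assumes "0 \<le> n" "n\<^sup>2 \<le> N" "0 \<le> K" "0 \<le> t"
  shows "(n + sqrt (K * N) * t)\<^sup>2 \<le> (2 + 2 * K) * (1 + t)\<^sup>2 * N"
proof -
  have N: "0 \<le> N"
    using assms(2) by (meson order_trans zero_le_power2)
  have "(n + sqrt (K * N) * t)\<^sup>2 \<le> 2 * n\<^sup>2 + 2 * (K * N) * t\<^sup>2"
    using sum_squares_bound[of n "sqrt (K * N) * t"] assms N by (simp add: power2_sum power_mult_distrib)
  also have "\<dots> \<le> 2 * ((1 + t)\<^sup>2 * N) + 2 * K * ((1 + t)\<^sup>2 * N)"
  proof -
    have "1 \<le> (1 + t)\<^sup>2" "t\<^sup>2 \<le> (1 + t)\<^sup>2"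
      using assms by (simp_all add: one_le_power power_mono)
    then have n: "n\<^sup>2 \<le> (1 + t)\<^sup>2 * N" and Nt: "N * t\<^sup>2 \<le> N * (1 + t)\<^sup>2"
      using assms N by (auto intro: order_trans[OF _ mult_right_mono[of 1]] mult_left_mono)
    have "K * (N * t\<^sup>2) \<le> K * (N * (1 + t)\<^sup>2)"
      using Nt assms(3) by (rule mult_left_mono)
    with n show ?thesis
      by (simp add: algebra_simps)
  qed
  finally show ?thesis
    by (simp add: algebra_simps)
qed

lemma is_solution_L2_pointwise:
  assumes sol: "is_solution a b \<theta> U0 U1 U V" and ab: "0 < a\<^sup>2" "a\<^sup>2 \<le> b\<^sup>2" and "\<xi> \<noteq> 0" and t: "0 \<le> t"
  shows "(cmod (U t \<xi> $ k))\<^sup>2 \<le> (2 + 2 * energy_const (a\<^sup>2) (b\<^sup>2)) * (1 + t)\<^sup>2 * data_density 0 U0 U1 \<xi>"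
proof -
  define K N where "K = energy_const (a\<^sup>2) (b\<^sup>2)" and "N = data_density 0 U0 U1 \<xi>"
  have K: "0 \<le> K"
    using ab unfolding K_def by (intro energy_const_nonneg) auto
  have "cmod (U t \<xi> $ k - U 0 \<xi> $ k) \<le> sqrt (K * N) * t"
  proof (rule has_vector_derivative_bound_imp_norm_diff_le[OF _ _ t])
    fix \<tau> :: real assume "0 \<le> \<tau>"
    with sol have "((\<lambda>t. U t \<xi>) has_vector_derivative V \<tau> \<xi>) (at \<tau> within {0..})"
      by (simp add: is_solution_def)
    then show "((\<lambda>t. U t \<xi> $ k) has_vector_derivative V \<tau> \<xi> $ k) (at \<tau> within {0..})"
      by (rule bounded_linear.has_vector_derivative[OF bounded_linear_vec_nth])
    show "cmod (V \<tau> \<xi> $ k) \<le> sqrt (K * N)"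
      using is_solution_velocity_le[OF sol ab \<open>\<xi> \<noteq> 0\<close> \<open>0 \<le> \<tau>\<close>] by (simp add: K_def N_def real_le_rsqrt)
  qed
  moreover have "U 0 \<xi> = U0 \<xi>" "cmod (U0 \<xi> $ k) \<le> norm (U0 \<xi>)"
    using sol by (simp_all add: is_solution_def Finite_Cartesian_Product.norm_nth_le)
  ultimately have "cmod (U t \<xi> $ k) \<le> norm (U0 \<xi>) + sqrt (K * N) * t"
    using norm_triangle_ineq2[of "U t \<xi> $ k" "U0 \<xi> $ k"] by simp
  then have "(cmod (U t \<xi> $ k))\<^sup>2 \<le> (norm (U0 \<xi>) + sqrt (K * N) * t)\<^sup>2"
    by (intro power_mono) auto
  also have "\<dots> \<le> (2 + 2 * K) * (1 + t)\<^sup>2 * N"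
    using K t by (intro power2_add_sqrt_mult_le) (auto simp: N_def data_density_0 algebra_simps)
  finally show ?thesis
    by (simp add: K_def N_def)
qed

section \<open>Integration over frequencies\<close>

lemma in_Hs_mono:
  assumes "in_Hs s f" "s' \<le> s"
  shows "in_Hs s' f"
proof -
  have [measurable]: "f \<in> borel_measurable lborel"
    and int: "integrable lborel (\<lambda>\<xi>. (1 + (norm \<xi>)\<^sup>2) powr s * (cmod (f \<xi>))\<^sup>2)"
    using assms(1) by (simp_all add: in_Hs_def)
  have "integrable lborel (\<lambda>\<xi>. (1 + (norm \<xi>)\<^sup>2) powr s' * (cmod (f \<xi>))\<^sup>2)"
  proof (rule Bochner_Integration.integrable_bound[OF int])
    show "AE \<xi> in lborel. norm ((1 + (norm \<xi>)\<^sup>2) powr s' * (cmod (f \<xi>))\<^sup>2)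
        \<le> norm ((1 + (norm \<xi>)\<^sup>2) powr s * (cmod (f \<xi>))\<^sup>2)"
      using assms(2) by (intro AE_I2) (simp add: mult_right_mono powr_mono)
  qed measurable
  then show ?thesis
    by (simp add: in_Hs_def)
qed

lemma integrable_integral_le_of_AE_le:
  fixes g B :: "'a \<Rightarrow> real"
  assumes "integrable M B" "g \<in> borel_measurable M" "AE x in M. 0 \<le> g x \<and> g x \<le> c * B x"
  shows "integrable M g" and "integral\<^sup>L M g \<le> c * integral\<^sup>L M B"
proof -
  have cB: "integrable M (\<lambda>x. c * B x)"
    using assms(1) by simp
  show g: "integrable M g"
    by (rule Bochner_Integration.integrable_bound[OF cB assms(2)]) (use assms(3) in \<open>eventually_elim, auto\<close>)
  have "integral\<^sup>L M g \<le> integral\<^sup>L M (\<lambda>x. c * B x)"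
    by (rule integral_mono_AE[OF g cB]) (use assms(3) in \<open>eventually_elim, auto\<close>)
  then show "integral\<^sup>L M g \<le> c * integral\<^sup>L M B"
    by simp
qed

lemma sum_power2_le_power2_sum:
  assumes "\<And>i. i \<in> A \<Longrightarrow> 0 \<le> f i"
  shows "(\<Sum>i\<in>A. (f i)\<^sup>2) \<le> (\<Sum>i\<in>A. f i :: real)\<^sup>2"
proof -
  have "(\<Sum>i\<in>A. (f i)\<^sup>2) = (L2_set f A)\<^sup>2"
    by (simp add: L2_set_def sum_nonneg)
  also have "\<dots> \<le> (sum f A)\<^sup>2"
    using assms by (intro power_mono L2_set_le_sum L2_set_nonneg)
  finally show ?thesis .
qed

lemma Hs_norm_nonneg: "0 \<le> Hs_norm s f"
  by (simp add: Hs_norm_def)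

lemma Hs_norm_power2: "(Hs_norm s f)\<^sup>2 = (LINT \<xi>|lborel. (1 + (norm \<xi>)\<^sup>2) powr s * (cmod (f \<xi>))\<^sup>2)"
  unfolding Hs_norm_def by (rule real_sqrt_pow2) (simp add: integral_nonneg_AE)

lemma data_density_eq_sum:
  "data_density \<sigma> U0 U1 = (\<lambda>\<xi>. \<Sum>j\<in>UNIV. (1 + (norm \<xi>)\<^sup>2) powr (\<sigma> + 1) * (cmod (U0 \<xi> $ j))\<^sup>2
      + (1 + (norm \<xi>)\<^sup>2) powr \<sigma> * (cmod (U1 \<xi> $ j))\<^sup>2)"
proof
  fix \<xi> :: "real^3"
  let ?R = "1 + (norm \<xi>)\<^sup>2"
  have normsq: "(norm w)\<^sup>2 = (\<Sum>j\<in>UNIV. (cmod (w $ j))\<^sup>2)" for w :: "complex^3"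
    by (simp add: norm_vec_def L2_set_def sum_nonneg)
  have sum_eq: "(\<Sum>j\<in>UNIV. ?R powr (\<sigma> + 1) * (cmod (U0 \<xi> $ j))\<^sup>2 + ?R powr \<sigma> * (cmod (U1 \<xi> $ j))\<^sup>2)
      = ?R powr (\<sigma> + 1) * (norm (U0 \<xi>))\<^sup>2 + ?R powr \<sigma> * (norm (U1 \<xi>))\<^sup>2"
    by (simp only: sum.distrib normsq sum_distrib_left)
  have pow: "?R powr (\<sigma> + 1) = ?R powr \<sigma> * ?R"
    by (simp add: powr_add)
  have ring: "x * (y * z + w) = x * y * z + x * w" for x y z w :: real
    by (simp add: algebra_simps)
  show "data_density \<sigma> U0 U1 \<xi> = (\<Sum>j\<in>UNIV. ?R powr (\<sigma> + 1) * (cmod (U0 \<xi> $ j))\<^sup>2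
      + ?R powr \<sigma> * (cmod (U1 \<xi> $ j))\<^sup>2)"
    unfolding sum_eq unfolding pow data_density_def by (rule ring)
qed

lemma data_density_integrable:
  assumes "\<And>j. in_Hs (\<sigma> + 1) (\<lambda>\<xi>. U0 \<xi> $ j)" "\<And>j. in_Hs \<sigma> (\<lambda>\<xi>. U1 \<xi> $ j)"
  shows "integrable lborel (data_density \<sigma> U0 U1)"
    and "integral\<^sup>L lborel (data_density \<sigma> U0 U1)
      \<le> (\<Sum>j\<in>UNIV. Hs_norm (\<sigma> + 1) (\<lambda>\<xi>. U0 \<xi> $ j) + Hs_norm \<sigma> (\<lambda>\<xi>. U1 \<xi> $ j))\<^sup>2"
proof -
  have i0: "integrable lborel (\<lambda>\<xi>. (1 + (norm \<xi>)\<^sup>2) powr (\<sigma> + 1) * (cmod (U0 \<xi> $ j))\<^sup>2)"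
    and i1: "integrable lborel (\<lambda>\<xi>. (1 + (norm \<xi>)\<^sup>2) powr \<sigma> * (cmod (U1 \<xi> $ j))\<^sup>2)" for j
    using assms by (simp_all add: in_Hs_def)
  show "integrable lborel (data_density \<sigma> U0 U1)"
    unfolding data_density_eq_sum using i0 i1
    by (intro Bochner_Integration.integrable_sum Bochner_Integration.integrable_add)
  have "integral\<^sup>L lborel (data_density \<sigma> U0 U1)
      = (\<Sum>j\<in>UNIV. (Hs_norm (\<sigma> + 1) (\<lambda>\<xi>. U0 \<xi> $ j))\<^sup>2 + (Hs_norm \<sigma> (\<lambda>\<xi>. U1 \<xi> $ j))\<^sup>2)"
    unfolding data_density_eq_sum using i0 i1 by (simp add: Bochner_Integration.integral_sum Hs_norm_power2)
  also have "\<dots> \<le> (\<Sum>j\<in>UNIV. (Hs_norm (\<sigma> + 1) (\<lambda>\<xi>. U0 \<xi> $ j) + Hs_norm \<sigma> (\<lambda>\<xi>. U1 \<xi> $ j))\<^sup>2)"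
    by (intro sum_mono) (simp add: power2_sum Hs_norm_nonneg)
  also have "\<dots> \<le> (\<Sum>j\<in>UNIV. Hs_norm (\<sigma> + 1) (\<lambda>\<xi>. U0 \<xi> $ j) + Hs_norm \<sigma> (\<lambda>\<xi>. U1 \<xi> $ j))\<^sup>2"
    by (intro sum_power2_le_power2_sum add_nonneg_nonneg Hs_norm_nonneg)
  finally show "integral\<^sup>L lborel (data_density \<sigma> U0 U1)
      \<le> (\<Sum>j\<in>UNIV. Hs_norm (\<sigma> + 1) (\<lambda>\<xi>. U0 \<xi> $ j) + Hs_norm \<sigma> (\<lambda>\<xi>. U1 \<xi> $ j))\<^sup>2" .
qed

lemma AE_lborel_nonzero: "AE \<xi> in lborel. (\<xi>::'a::euclidean_space) \<noteq> 0"
  by (rule AE_I'[of "{0}"]) (auto intro: countable_imp_null_set_lborel)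

lemma in_Hs_measurable: "in_Hs s f \<Longrightarrow> f \<in> borel_measurable lborel"
  by (simp add: in_Hs_def)

lemma integral_le_data_density:
  assumes data: "\<And>j. in_Hs (\<sigma> + 1) (\<lambda>\<xi>. U0 \<xi> $ j)" "\<And>j. in_Hs \<sigma> (\<lambda>\<xi>. U1 \<xi> $ j)"
    and g: "g \<in> borel_measurable lborel" and c: "0 \<le> c"
    and bound: "AE \<xi> in lborel. 0 \<le> g \<xi> \<and> g \<xi> \<le> c * data_density \<sigma> U0 U1 \<xi>"
  shows "integrable lborel g"
    and "integral\<^sup>L lborel g
      \<le> c * (\<Sum>j\<in>UNIV. Hs_norm (\<sigma> + 1) (\<lambda>\<xi>. U0 \<xi> $ j) + Hs_norm \<sigma> (\<lambda>\<xi>. U1 \<xi> $ j))\<^sup>2"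
proof -
  note dens = data_density_integrable[OF data]
  show "integrable lborel g"
    by (rule integrable_integral_le_of_AE_le(1)[OF dens(1) g bound])
  show "integral\<^sup>L lborel g
      \<le> c * (\<Sum>j\<in>UNIV. Hs_norm (\<sigma> + 1) (\<lambda>\<xi>. U0 \<xi> $ j) + Hs_norm \<sigma> (\<lambda>\<xi>. U1 \<xi> $ j))\<^sup>2"
    using integrable_integral_le_of_AE_le(2)[OF dens(1) g bound] mult_left_mono[OF dens(2) c]
    by linarith
qed

lemma is_solution_L2_estimate:
  assumes sol: "is_solution a b \<theta> U0 U1 U V" and ab: "0 < a\<^sup>2" "a\<^sup>2 \<le> b\<^sup>2"
    and data: "\<And>j. in_Hs 1 (\<lambda>\<xi>. U0 \<xi> $ j)" "\<And>j. in_Hs 0 (\<lambda>\<xi>. U1 \<xi> $ j)" and t: "0 \<le> t"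
  defines "S \<equiv> \<Sum>j\<in>UNIV. Hs_norm 1 (\<lambda>\<xi>. U0 \<xi> $ j) + Hs_norm 0 (\<lambda>\<xi>. U1 \<xi> $ j)"
  shows "in_Hs 0 (\<lambda>\<xi>. U t \<xi> $ k)"
    and "Hs_norm 0 (\<lambda>\<xi>. U t \<xi> $ k) \<le> sqrt (2 + 2 * energy_const (a\<^sup>2) (b\<^sup>2)) * (1 + t) * S"
proof -
  define c where "c = (2 + 2 * energy_const (a\<^sup>2) (b\<^sup>2)) * (1 + t)\<^sup>2"
  define g where "g \<xi> = (1 + (norm \<xi>)\<^sup>2) powr 0 * (cmod (U t \<xi> $ k))\<^sup>2" for \<xi> :: "real^3"
  have c: "0 \<le> c"
    using ab unfolding c_def by (intro mult_nonneg_nonneg add_nonneg_nonneg energy_const_nonneg) auto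
  note [measurable] = is_solution_measurable(1)[OF sol ab t in_Hs_measurable[OF data(1)] in_Hs_measurable[OF data(2)],
      where k = k]
  have bound: "AE \<xi> in lborel. 0 \<le> g \<xi> \<and> g \<xi> \<le> c * data_density 0 U0 U1 \<xi>"
    using AE_lborel_nonzero
  proof eventually_elim
    case (elim \<xi>)
    then show ?case
      using is_solution_L2_pointwise[OF sol ab elim t, of k] by (simp add: g_def c_def add_nonneg_eq_0_iff)
  qed
  have "in_Hs (0 + 1) (\<lambda>\<xi>. U0 \<xi> $ j)" for j
    using data(1) by simp
  moreover have "g \<in> borel_measurable lborel"
    unfolding g_def by measurable
  ultimately have g: "integrable lborel g" "integral\<^sup>L lborel g \<le> c * S\<^sup>2"
    using integral_le_data_density[OF _ data(2) _ c bound] unfolding S_def add.left_neutral by blast+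
  show "in_Hs 0 (\<lambda>\<xi>. U t \<xi> $ k)"
    using g(1) unfolding in_Hs_def g_def[abs_def] by simp
  have "Hs_norm 0 (\<lambda>\<xi>. U t \<xi> $ k) = sqrt (integral\<^sup>L lborel g)"
    unfolding Hs_norm_def g_def[abs_def] ..
  also have "\<dots> \<le> sqrt (c * S\<^sup>2)"
    using g(2) by (simp add: g_def[abs_def])
  also have "\<dots> = sqrt (2 + 2 * energy_const (a\<^sup>2) (b\<^sup>2)) * (1 + t) * S"
    using t by (simp add: c_def real_sqrt_mult S_def Hs_norm_nonneg sum_nonneg)
  finally show "Hs_norm 0 (\<lambda>\<xi>. U t \<xi> $ k) \<le> sqrt (2 + 2 * energy_const (a\<^sup>2) (b\<^sup>2)) * (1 + t) * S" .
qed

lemma is_solution_decay_integrable: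
  fixes k :: 3
  assumes sol: "is_solution a b \<theta> U0 U1 U V" and ab: "0 < a\<^sup>2" "a\<^sup>2 \<le> b\<^sup>2"
    and \<theta>: "0 \<le> \<theta>" "\<theta> \<le> 1" and s: "0 \<le> s"
    and data: "\<And>j. in_Hs (s + 1) (\<lambda>\<xi>. U0 \<xi> $ j)" "\<And>j. in_Hs s (\<lambda>\<xi>. U1 \<xi> $ j)" and t: "0 \<le> t"
  defines "P \<equiv> \<lambda>\<xi>. (sym_pow (s + 1) \<xi>)\<^sup>2 * (cmod (U t \<xi> $ k))\<^sup>2"
    and "Q \<equiv> \<lambda>\<xi>. (sym_pow s \<xi>)\<^sup>2 * (cmod (V t \<xi> $ k))\<^sup>2"
    and "c \<equiv> energy_const (a\<^sup>2) (b\<^sup>2) * weight_const a \<theta> s * (1 + t) powr (- s / max (1 - \<theta>) \<theta>)"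
  shows "integrable lborel P" and "integrable lborel Q"
    and "integral\<^sup>L lborel (\<lambda>\<xi>. P \<xi> + Q \<xi>)
      \<le> c * (\<Sum>j\<in>UNIV. Hs_norm (s + 1) (\<lambda>\<xi>. U0 \<xi> $ j) + Hs_norm s (\<lambda>\<xi>. U1 \<xi> $ j))\<^sup>2"
proof -
  have c: "0 \<le> c"
    using ab unfolding c_def by (intro mult_nonneg_nonneg energy_const_nonneg weight_const_nonneg) auto
  note meas = is_solution_measurable[OF sol ab t in_Hs_measurable[OF data(1)] in_Hs_measurable[OF data(2)]]
  note [measurable] = meas(1)[of k] meas(2)[of k]
  have Pm [measurable]: "P \<in> borel_measurable lborel"
    unfolding P_def by measurable
  have Qm [measurable]: "Q \<in> borel_measurable lborel"
    unfolding Q_def by measurable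
  have "AE \<xi> in lborel. 0 \<le> P \<xi> \<and> 0 \<le> Q \<xi> \<and> P \<xi> + Q \<xi> \<le> c * data_density s U0 U1 \<xi>"
    using AE_lborel_nonzero
  proof eventually_elim
    case (elim \<xi>)
    then show ?case
      using is_solution_decay_pointwise[OF sol ab \<theta> s elim t, of k] by (simp add: P_def Q_def c_def)
  qed
  then show "integrable lborel P" and "integrable lborel Q"
    and "integral\<^sup>L lborel (\<lambda>\<xi>. P \<xi> + Q \<xi>)
      \<le> c * (\<Sum>j\<in>UNIV. Hs_norm (s + 1) (\<lambda>\<xi>. U0 \<xi> $ j) + Hs_norm s (\<lambda>\<xi>. U1 \<xi> $ j))\<^sup>2"
    by (auto intro!: integral_le_data_density[OF data _ c] intro: eventually_mono)
qed

lemma sqrt_add_le_sqrt_double: "0 \<le> x \<Longrightarrow> 0 \<le> y \<Longrightarrow> sqrt x + sqrt y \<le> sqrt (2 * (x + y))"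
  by (rule real_le_rsqrt) (use sum_squares_bound[of "sqrt x" "sqrt y"] in \<open>simp add: power2_sum\<close>)

lemma is_solution_decay_estimate:
  assumes sol: "is_solution a b \<theta> U0 U1 U V" and ab: "0 < a\<^sup>2" "a\<^sup>2 \<le> b\<^sup>2"
    and \<theta>: "0 \<le> \<theta>" "\<theta> \<le> 1" and s: "0 \<le> s"
    and data: "\<And>j. in_Hs (s + 1) (\<lambda>\<xi>. U0 \<xi> $ j)" "\<And>j. in_Hs s (\<lambda>\<xi>. U1 \<xi> $ j)" and t: "0 \<le> t"
  defines "S \<equiv> \<Sum>j\<in>UNIV. Hs_norm (s + 1) (\<lambda>\<xi>. U0 \<xi> $ j) + Hs_norm s (\<lambda>\<xi>. U1 \<xi> $ j)"
  shows "in_dotHs (s + 1) (\<lambda>\<xi>. U t \<xi> $ k)" and "in_dotHs s (\<lambda>\<xi>. V t \<xi> $ k)"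
    and "D_norm (s + 1) (\<lambda>\<xi>. U t \<xi> $ k) + D_norm s (\<lambda>\<xi>. V t \<xi> $ k)
      \<le> sqrt (2 * energy_const (a\<^sup>2) (b\<^sup>2) * weight_const a \<theta> s)
         * (1 + t) powr (- s / (2 * max (1 - \<theta>) \<theta>)) * S"
proof -
  define p where "p = s / max (1 - \<theta>) \<theta>"
  define P Q where "P \<xi> = (sym_pow (s + 1) \<xi>)\<^sup>2 * (cmod (U t \<xi> $ k))\<^sup>2"
    and "Q \<xi> = (sym_pow s \<xi>)\<^sup>2 * (cmod (V t \<xi> $ k))\<^sup>2" for \<xi>
  note PQ = is_solution_decay_integrable[OF sol ab \<theta> s data t, where k = k, folded P_def Q_def S_def]
  show "in_dotHs (s + 1) (\<lambda>\<xi>. U t \<xi> $ k)" "in_dotHs s (\<lambda>\<xi>. V t \<xi> $ k)"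
    using PQ(1,2) is_solution_measurable[OF sol ab t in_Hs_measurable[OF data(1)] in_Hs_measurable[OF data(2)]]
    by (simp_all add: in_dotHs_def P_def[abs_def] Q_def[abs_def])
  have "D_norm (s + 1) (\<lambda>\<xi>. U t \<xi> $ k) + D_norm s (\<lambda>\<xi>. V t \<xi> $ k)
      = sqrt (integral\<^sup>L lborel P) + sqrt (integral\<^sup>L lborel Q)"
    unfolding D_norm_def P_def[abs_def] Q_def[abs_def] ..
  also have "\<dots> \<le> sqrt (2 * (integral\<^sup>L lborel P + integral\<^sup>L lborel Q))"
    by (rule sqrt_add_le_sqrt_double) (simp_all add: P_def Q_def integral_nonneg_AE)
  also have "integral\<^sup>L lborel P + integral\<^sup>L lborel Q = integral\<^sup>L lborel (\<lambda>\<xi>. P \<xi> + Q \<xi>)"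
    using PQ(1,2) by simp
  also have "sqrt (2 * integral\<^sup>L lborel (\<lambda>\<xi>. P \<xi> + Q \<xi>))
      \<le> sqrt (2 * energy_const (a\<^sup>2) (b\<^sup>2) * weight_const a \<theta> s * (1 + t) powr (- p) * S\<^sup>2)"
    using PQ(3) by (simp add: p_def mult.assoc)
  also have "\<dots> = sqrt (2 * energy_const (a\<^sup>2) (b\<^sup>2) * weight_const a \<theta> s)
      * (1 + t) powr (- s / (2 * max (1 - \<theta>) \<theta>)) * S"
  proof -
    have "sqrt ((1 + t) powr (- p)) = (1 + t) powr (- s / (2 * max (1 - \<theta>) \<theta>))"
      using t by (simp add: p_def powr_half_sqrt_powr[symmetric] mult.commute)
    moreover have "\<bar>S\<bar> = S"
      by (simp add: S_def Hs_norm_nonneg sum_nonneg)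
    ultimately show ?thesis
      by (simp only: real_sqrt_mult real_sqrt_abs)
  qed
  finally show "D_norm (s + 1) (\<lambda>\<xi>. U t \<xi> $ k) + D_norm s (\<lambda>\<xi>. V t \<xi> $ k)
      \<le> sqrt (2 * energy_const (a\<^sup>2) (b\<^sup>2) * weight_const a \<theta> s)
         * (1 + t) powr (- s / (2 * max (1 - \<theta>) \<theta>)) * S" .
qed

definition estimate_const :: "real \<Rightarrow> real \<Rightarrow> real \<Rightarrow> real \<Rightarrow> real" where
  "estimate_const a b \<theta> s = max (sqrt (2 + 2 * energy_const (a\<^sup>2) (b\<^sup>2)))
     (sqrt (2 * energy_const (a\<^sup>2) (b\<^sup>2) * weight_const a \<theta> s))"

lemma is_solution_estimates:
  assumes sol: "is_solution a b \<theta> U0 U1 U V" and ab: "0 < a\<^sup>2" "a\<^sup>2 \<le> b\<^sup>2"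
    and \<theta>: "0 \<le> \<theta>" "\<theta> \<le> 1" and s: "0 \<le> s"
    and data: "\<And>j. in_Hs (s + 1) (\<lambda>\<xi>. U0 \<xi> $ j)" "\<And>j. in_Hs s (\<lambda>\<xi>. U1 \<xi> $ j)" and t: "0 \<le> t"
  defines "C \<equiv> estimate_const a b \<theta> s"
  shows "in_Hs 0 (\<lambda>\<xi>. U t \<xi> $ k) \<and>
       Hs_norm 0 (\<lambda>\<xi>. U t \<xi> $ k)
         \<le> C * (1 + t) * (\<Sum>j\<in>UNIV. Hs_norm 1 (\<lambda>\<xi>. U0 \<xi> $ j) + Hs_norm 0 (\<lambda>\<xi>. U1 \<xi> $ j)) \<and>
       in_dotHs (s + 1) (\<lambda>\<xi>. U t \<xi> $ k) \<and> in_dotHs s (\<lambda>\<xi>. V t \<xi> $ k) \<and>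
       D_norm (s + 1) (\<lambda>\<xi>. U t \<xi> $ k) + D_norm s (\<lambda>\<xi>. V t \<xi> $ k)
         \<le> C * (1 + t) powr (- s / (2 * max (1 - \<theta>) \<theta>)) *
           (\<Sum>j\<in>UNIV. Hs_norm (s + 1) (\<lambda>\<xi>. U0 \<xi> $ j) + Hs_norm s (\<lambda>\<xi>. U1 \<xi> $ j))"
proof -
  have "in_Hs 1 (\<lambda>\<xi>. U0 \<xi> $ j)" "in_Hs 0 (\<lambda>\<xi>. U1 \<xi> $ j)" for j
    using in_Hs_mono[OF data(1), of 1] in_Hs_mono[OF data(2), of 0] s by simp_all
  note L2 = is_solution_L2_estimate[OF sol ab this t, where k = k]
  note decay = is_solution_decay_estimate[OF sol ab \<theta> s data t, where k = k]
  have S: "0 \<le> (\<Sum>j\<in>UNIV. Hs_norm \<sigma> (\<lambda>\<xi>. U0 \<xi> $ j) + Hs_norm \<sigma>' (\<lambda>\<xi>. U1 \<xi> $ j))" for \<sigma> \<sigma>'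
    by (intro sum_nonneg add_nonneg_nonneg Hs_norm_nonneg)
  have "sqrt (2 + 2 * energy_const (a\<^sup>2) (b\<^sup>2)) \<le> C"
    and "sqrt (2 * energy_const (a\<^sup>2) (b\<^sup>2) * weight_const a \<theta> s) \<le> C"
    by (simp_all add: C_def estimate_const_def)
  then have "Hs_norm 0 (\<lambda>\<xi>. U t \<xi> $ k)
      \<le> C * (1 + t) * (\<Sum>j\<in>UNIV. Hs_norm 1 (\<lambda>\<xi>. U0 \<xi> $ j) + Hs_norm 0 (\<lambda>\<xi>. U1 \<xi> $ j))"
    and "D_norm (s + 1) (\<lambda>\<xi>. U t \<xi> $ k) + D_norm s (\<lambda>\<xi>. V t \<xi> $ k)
      \<le> C * (1 + t) powr (- s / (2 * max (1 - \<theta>) \<theta>)) *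
        (\<Sum>j\<in>UNIV. Hs_norm (s + 1) (\<lambda>\<xi>. U0 \<xi> $ j) + Hs_norm s (\<lambda>\<xi>. U1 \<xi> $ j))"
    using t S by (intro order_trans[OF L2(2)] order_trans[OF decay(3)] mult_right_mono; simp)+
  with L2(1) decay(1,2) show ?thesis
    by blast
qed

theorem theorem3p4:
  fixes a b \<theta> s :: real
  assumes "b\<^sup>2 > a\<^sup>2" and "a\<^sup>2 > 0" and "0 \<le> \<theta>" and "\<theta> \<le> 1" and "0 \<le> s"
  shows "\<exists>C. \<forall>U0 U1 U V.
    (\<forall>j. in_Hs (s + 1) (\<lambda>\<xi>. U0 \<xi> $ j) \<and> in_Hs s (\<lambda>\<xi>. U1 \<xi> $ j)) \<and>
    is_solution a b \<theta> U0 U1 U V \<longrightarrow>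
    (\<forall>t\<ge>0. \<forall>k::3.
       in_Hs 0 (\<lambda>\<xi>. U t \<xi> $ k) \<and>
       Hs_norm 0 (\<lambda>\<xi>. U t \<xi> $ k)
         \<le> C * (1 + t) * (\<Sum>j\<in>UNIV. Hs_norm 1 (\<lambda>\<xi>. U0 \<xi> $ j) + Hs_norm 0 (\<lambda>\<xi>. U1 \<xi> $ j)) \<and>
       in_dotHs (s + 1) (\<lambda>\<xi>. U t \<xi> $ k) \<and> in_dotHs s (\<lambda>\<xi>. V t \<xi> $ k) \<and>
       D_norm (s + 1) (\<lambda>\<xi>. U t \<xi> $ k) + D_norm s (\<lambda>\<xi>. V t \<xi> $ k)
         \<le> C * (1 + t) powr (- s / (2 * max (1 - \<theta>) \<theta>)) *
           (\<Sum>j\<in>UNIV. Hs_norm (s + 1) (\<lambda>\<xi>. U0 \<xi> $ j) + Hs_norm s (\<lambda>\<xi>. U1 \<xi> $ j)))"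
  by (intro exI[of _ "estimate_const a b \<theta> s"] allI impI, elim conjE, rule is_solution_estimates)
    (use assms in auto)

end
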